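(* Drift-less setting with target $\rho_d=|\Psi\rangle\langle\Psi|$ and neighborhoods $\mathcal N_1,\dots,\mathcal N_M$. Assume that for every $k$ the strict inclusion $\mathcal H^w_{\mathcal N_k}\subsetneq\mathcal H^\circ_{\mathcal N_k}$ holds. Let $\mathcal H'=\mathcal H\ominus\bigcap_k\big(\mathcal H^w_{\mathcal N_k}\otimes\mathcal H_{\bar{\mathcal N}_k}\big)$, and let $D_k=D_{\mathcal N_k}\otimes I_{\bar{\mathcal N}_k}$, where each $D_{\mathcal N_k}$ annihilates $\mathcal H^w_{\mathcal N_k}\oplus\mathcal H^t_{\mathcal N_k}$ and maps $\mathcal H^r_{\mathcal N_k}$ into $\mathcal H^t_{\mathcal N_k}\oplus\mathcal H^r_{\mathcal N_k}$, chosen so that $\mathfrak D(\mathcal H_0)$ is globally asymptotically stable for $\mathcal L(0,\{D_k\})$. Then $\rho_d$ is $\mathcal H'$-DQLS via these $D_k$, i.e. $e^{\mathcal L(0,\{D_k\})t}(\rho_0)\to\rho_d$ for all $\rho_0\in\mathfrak D(\mathcal H')$.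
   Context: $\mathcal H=\bigotimes_{a=1}^n\mathcal H_a$ finite-dimensional; $\mathcal H_{\mathcal N_k}=\bigotimes_{a\in\mathcal N_k}\mathcal H_a$, $\mathcal H_{\bar{\mathcal N}_k}=\bigotimes_{a\notin\mathcal N_k}\mathcal H_a$. $\mathfrak D(\mathcal K)$: density operators supported in $\mathcal K$. $\mathcal L(0,\{D_k\})(\rho)=\sum_k(D_k\rho D_k^\dagger-\frac12\{D_k^\dagger D_k,\rho\})$; $\mathfrak D(\mathcal H_0)$ GAS means every trajectory converges to the set $\mathfrak D(\mathcal H_0)$. $\mathcal H_d=\mathrm{span}\{|\Psi\rangle\}$; $\rho_{\mathcal N_k}=\mathrm{Tr}_{\bar{\mathcal N}_k}\rho_d$; $\mathcal H_0=\bigcap_k\mathrm{supp}(\rho_{\mathcal N_k}\otimes I_{\bar{\mathcal N}_k})$; $\mathcal H_w=\mathcal H_0\ominus\mathcal H_d$ with projector $\Pi_{\mathcal H_w}$. $\mathcal H^\circ_{\mathcal N_k}=\mathrm{supp}(\rho_{\mathcal N_k})$, $\mathcal H^r_{\mathcal N_k}=\mathcal H_{\mathcal N_k}\ominus\mathcal H^\circ_{\mathcal N_k}$, $\mathcal H^w_{\mathcal N_k}=\mathrm{supp}(\mathrm{Tr}_{\bar{\mathcal N}_k}\Pi_{\mathcal H_w})$, $\mathcal H^t_{\mathcal N_k}=\mathcal H^\circ_{\mathcal N_k}\ominus\mathcal H^w_{\mathcal N_k}$. *)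

theory Defs
  imports Complex_Main
begin

text \<open>
Finite-dimensional multipartite Hilbert space H = tensor product of H_a, a < n, with
dim H_a = d a.  The computational (product) basis of H is indexed by configurations
c :: nat => nat with c a < d a for a < n and c a = 0 for a >= n.  Everything lives inside the coordinate space of H; a subsystem
N (a subset of sites) is represented by the configurations vanishing outside N.
\<close>

type_synonym cfg = "nat \<Rightarrow> nat"
type_synonym vect = "cfg \<Rightarrow> complex"
type_synonym cmat = "cfg \<Rightarrow> cfg \<Rightarrow> complex"

definition configs :: "nat \<Rightarrow> (nat \<Rightarrow> nat) \<Rightarrow> cfg set" where
  "configs n d = {c. \<forall>a. (a < n \<longrightarrow> c a < d a) \<and> (n \<le> a \<longrightarrow> c a = 0)}"

definition restr :: "nat set \<Rightarrow> cfg \<Rightarrow> cfg" where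
  "restr N c = (\<lambda>a. if a \<in> N then c a else 0)"

definition sub_configs :: "nat \<Rightarrow> (nat \<Rightarrow> nat) \<Rightarrow> nat set \<Rightarrow> cfg set" where
  "sub_configs n d N = restr N ` configs n d"

definition vecs :: "cfg set \<Rightarrow> vect set" where
  "vecs S = {v. \<forall>c. c \<notin> S \<longrightarrow> v c = 0}"

definition inner_on :: "cfg set \<Rightarrow> vect \<Rightarrow> vect \<Rightarrow> complex" where
  "inner_on S w v = (\<Sum>c\<in>S. cnj (w c) * v c)"

definition mapply :: "cfg set \<Rightarrow> cmat \<Rightarrow> vect \<Rightarrow> vect" where
  "mapply S A x = (\<lambda>i. \<Sum>j\<in>S. A i j * x j)"

definition mmul :: "cfg set \<Rightarrow> cmat \<Rightarrow> cmat \<Rightarrow> cmat" where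
  "mmul S A B = (\<lambda>i j. \<Sum>c\<in>S. A i c * B c j)"

definition adj :: "cmat \<Rightarrow> cmat" where
  "adj A = (\<lambda>i j. cnj (A j i))"

definition supported_on :: "cfg set \<Rightarrow> cmat \<Rightarrow> bool" where
  "supported_on S A \<longleftrightarrow> (\<forall>i j. i \<notin> S \<or> j \<notin> S \<longrightarrow> A i j = 0)"

text \<open>support (= range) of an operator on the space spanned by S\<close>
definition supp :: "cfg set \<Rightarrow> cmat \<Rightarrow> vect set" where
  "supp S A = mapply S A ` vecs S"

definition cspan :: "vect set \<Rightarrow> vect set" where
  "cspan X = {v. \<exists>F a. finite F \<and> F \<subseteq> X \<and> v = (\<lambda>i. \<Sum>x\<in>F. a x * x i)}"

text \<open>orthogonal complement of K2 inside K1 (K1 \<ominus> K2), inner product over the full basis S\<close>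
definition ominus :: "cfg set \<Rightarrow> vect set \<Rightarrow> vect set \<Rightarrow> vect set" where
  "ominus S K1 K2 = {v \<in> K1. \<forall>w\<in>K2. inner_on S w v = 0}"

definition osum :: "vect set \<Rightarrow> vect set \<Rightarrow> vect set" where
  "osum K1 K2 = {(\<lambda>i. u i + w i) | u w. u \<in> K1 \<and> w \<in> K2}"

definition proj :: "cfg set \<Rightarrow> vect set \<Rightarrow> cmat" where
  "proj S K = (SOME P. supported_on S P \<and>
      (\<forall>v\<in>vecs S. mapply S P v \<in> K \<and> (\<forall>w\<in>K. inner_on S w (\<lambda>i. v i - mapply S P v i) = 0)))"

text \<open>partial trace over the complement of N: Tr_{bar N} \<rho>, an operator on H_N\<close>
definition ptrace :: "nat \<Rightarrow> (nat \<Rightarrow> nat) \<Rightarrow> nat set \<Rightarrow> cmat \<Rightarrow> cmat" where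
  "ptrace n d N \<rho> = (\<lambda>x x'.
     if x \<in> sub_configs n d N \<and> x' \<in> sub_configs n d N then
       (\<Sum>y\<in>sub_configs n d (- N). \<rho> (\<lambda>a. if a \<in> N then x a else y a)
                                        (\<lambda>a. if a \<in> N then x' a else y a))
     else 0)"

text \<open>A_N \<otimes> I_{bar N} as an operator on H\<close>
definition kron_id :: "nat \<Rightarrow> (nat \<Rightarrow> nat) \<Rightarrow> nat set \<Rightarrow> cmat \<Rightarrow> cmat" where
  "kron_id n d N A = (\<lambda>c c'.
     if c \<in> configs n d \<and> c' \<in> configs n d \<and> restr (- N) c = restr (- N) c'
     then A (restr N c) (restr N c') else 0)"

text \<open>K_N \<otimes> H_{bar N} for a subspace K_N of H_N\<close>
definition tensor_full :: "nat \<Rightarrow> (nat \<Rightarrow> nat) \<Rightarrow> nat set \<Rightarrow> vect set \<Rightarrow> vect set" where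
  "tensor_full n d N K = cspan {(\<lambda>c. if c \<in> configs n d then v (restr N c) * w (restr (- N) c) else 0)
                              | v w. v \<in> K \<and> w \<in> vecs (sub_configs n d (- N))}"

definition psd_on :: "cfg set \<Rightarrow> cmat \<Rightarrow> bool" where
  "psd_on S A \<longleftrightarrow> (\<forall>v\<in>vecs S. Im (inner_on S v (mapply S A v)) = 0 \<and> Re (inner_on S v (mapply S A v)) \<ge> 0)"

definition dens :: "nat \<Rightarrow> (nat \<Rightarrow> nat) \<Rightarrow> vect set \<Rightarrow> cmat set" where
  "dens n d K = {\<rho>. supported_on (configs n d) \<rho> \<and> psd_on (configs n d) \<rho>
                    \<and> (\<Sum>c\<in>configs n d. \<rho> c c) = 1 \<and> supp (configs n d) \<rho> \<subseteq> K}"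

text \<open>Lindblad generator L(0,{D_k}), k < M (no Hamiltonian)\<close>
definition lindblad0 :: "cfg set \<Rightarrow> nat \<Rightarrow> (nat \<Rightarrow> cmat) \<Rightarrow> cmat \<Rightarrow> cmat" where
  "lindblad0 S M D \<rho> = (\<lambda>i j. \<Sum>k<M.
      mmul S (mmul S (D k) \<rho>) (adj (D k)) i j
      - (1/2) * (mmul S (mmul S (adj (D k)) (D k)) \<rho> i j + mmul S \<rho> (mmul S (adj (D k)) (D k)) i j))"

definition evol :: "(cmat \<Rightarrow> cmat) \<Rightarrow> real \<Rightarrow> cmat \<Rightarrow> cmat" where
  "evol L t \<rho> = (\<lambda>i j. \<Sum>m. complex_of_real (t ^ m / fact m) * (L ^^ m) \<rho> i j)"

definition mnorm :: "cfg set \<Rightarrow> cmat \<Rightarrow> real" where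
  "mnorm S A = sqrt (\<Sum>i\<in>S. \<Sum>j\<in>S. (cmod (A i j))\<^sup>2)"

definition GAS :: "nat \<Rightarrow> (nat \<Rightarrow> nat) \<Rightarrow> (cmat \<Rightarrow> cmat) \<Rightarrow> cmat set \<Rightarrow> bool" where
  "GAS n d L Q \<longleftrightarrow> (\<forall>\<rho>0 \<in> dens n d (vecs (configs n d)).
     ((\<lambda>t. INF \<sigma>\<in>Q. mnorm (configs n d) (\<lambda>i j. evol L t \<rho>0 i j - \<sigma> i j)) \<longlongrightarrow> 0) at_top)"


definition rho_d :: "vect \<Rightarrow> cmat" where
  "rho_d \<Psi> = (\<lambda>i j. \<Psi> i * cnj (\<Psi> j))"

definition H_d :: "vect \<Rightarrow> vect set" where
  "H_d \<Psi> = {(\<lambda>i. a * \<Psi> i) | a. True}"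

definition rho_N :: "nat \<Rightarrow> (nat \<Rightarrow> nat) \<Rightarrow> vect \<Rightarrow> nat set \<Rightarrow> cmat" where
  "rho_N n d \<Psi> Nk = ptrace n d Nk (rho_d \<Psi>)"

definition H_0 :: "nat \<Rightarrow> (nat \<Rightarrow> nat) \<Rightarrow> vect \<Rightarrow> nat \<Rightarrow> (nat \<Rightarrow> nat set) \<Rightarrow> vect set" where
  "H_0 n d \<Psi> M N = {v \<in> vecs (configs n d).
      \<forall>k<M. v \<in> supp (configs n d) (kron_id n d (N k) (rho_N n d \<Psi> (N k)))}"

definition H_w :: "nat \<Rightarrow> (nat \<Rightarrow> nat) \<Rightarrow> vect \<Rightarrow> nat \<Rightarrow> (nat \<Rightarrow> nat set) \<Rightarrow> vect set" where
  "H_w n d \<Psi> M N = ominus (configs n d) (H_0 n d \<Psi> M N) (H_d \<Psi>)"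

definition H_circ :: "nat \<Rightarrow> (nat \<Rightarrow> nat) \<Rightarrow> vect \<Rightarrow> nat set \<Rightarrow> vect set" where
  "H_circ n d \<Psi> Nk = supp (sub_configs n d Nk) (rho_N n d \<Psi> Nk)"

definition H_r :: "nat \<Rightarrow> (nat \<Rightarrow> nat) \<Rightarrow> vect \<Rightarrow> nat set \<Rightarrow> vect set" where
  "H_r n d \<Psi> Nk = ominus (configs n d) (vecs (sub_configs n d Nk)) (H_circ n d \<Psi> Nk)"

definition H_wloc :: "nat \<Rightarrow> (nat \<Rightarrow> nat) \<Rightarrow> vect \<Rightarrow> nat \<Rightarrow> (nat \<Rightarrow> nat set) \<Rightarrow> nat set \<Rightarrow> vect set" where
  "H_wloc n d \<Psi> M N Nk = supp (sub_configs n d Nk)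
      (ptrace n d Nk (proj (configs n d) (H_w n d \<Psi> M N)))"

definition H_t :: "nat \<Rightarrow> (nat \<Rightarrow> nat) \<Rightarrow> vect \<Rightarrow> nat \<Rightarrow> (nat \<Rightarrow> nat set) \<Rightarrow> nat set \<Rightarrow> vect set" where
  "H_t n d \<Psi> M N Nk = ominus (configs n d) (H_circ n d \<Psi> Nk) (H_wloc n d \<Psi> M N Nk)"

end

theory Submission
  imports Defs "HOL-Library.FuncSet"
begin

text \<open>Every w in H_w = H_0 \<ominus> H_d has all its slices w(\<cdot>, y) in H^w_{N_k}, so
  H_w \<subseteq> \<Inter>_k H^w_{N_k} \<otimes> H_{bar N_k}, and an initial state supported in H' satisfies
  w* \<rho>_0 = 0 for every w \<in> H_w. Each D_k = D_{N_k} \<otimes> I kills H_w and has range orthogonal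
  to H_w, so the condition w* \<rho> = 0 is preserved by the generator and hence along the
  trajectory. By global asymptotic stability the trajectory approaches some \<sigma> \<in> \<D>(H_0).
  Writing \<sigma> = \<Psi> \<alpha>^T + W with the columns of W in H_w, the invariant forces W to be small,
  and hermiticity together with Tr \<sigma> = 1 then forces \<sigma> to be close to |\<Psi>\<rangle>\<langle>\<Psi>|.\<close>

section \<open>Inner products and subspaces on a coordinate set\<close>

lemma inner_on_add_right: "inner_on T w (\<lambda>i. u i + v i) = inner_on T w u + inner_on T w v"
  by (simp add: inner_on_def distrib_left sum.distrib)

lemma inner_on_add_left: "inner_on T (\<lambda>i. u i + v i) w = inner_on T u w + inner_on T v w"
  by (simp add: inner_on_def distrib_right sum.distrib)

lemma inner_on_diff_right: "inner_on T w (\<lambda>i. u i - v i) = inner_on T w u - inner_on T w v"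
  by (simp add: inner_on_def right_diff_distrib sum_subtractf)

lemma inner_on_diff_left: "inner_on T (\<lambda>i. u i - v i) w = inner_on T u w - inner_on T v w"
  by (simp add: inner_on_def left_diff_distrib sum_subtractf)

lemma inner_on_scale_right: "inner_on T w (\<lambda>i. a * u i) = a * inner_on T w u"
  by (simp add: inner_on_def sum_distrib_left algebra_simps)

lemma inner_on_scale_left: "inner_on T (\<lambda>i. a * u i) w = cnj a * inner_on T u w"
  by (simp add: inner_on_def sum_distrib_left algebra_simps)

lemma inner_on_sum_right: "inner_on T w (\<lambda>i. \<Sum>e\<in>F. f e i) = (\<Sum>e\<in>F. inner_on T w (f e))"
  by (simp add: inner_on_def sum_distrib_left sum.swap[of _ T])

lemma inner_on_sum_left: "inner_on T (\<lambda>i. \<Sum>e\<in>F. f e i) w = (\<Sum>e\<in>F. inner_on T (f e) w)"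
  by (simp add: inner_on_def sum_distrib_right sum.swap[of _ T])

lemma inner_on_zero_right [simp]: "inner_on T w (\<lambda>_. 0) = 0"
  by (simp add: inner_on_def)

lemma inner_on_zero_left [simp]: "inner_on T (\<lambda>_. 0) w = 0"
  by (simp add: inner_on_def)

lemma inner_on_commute: "inner_on T v w = cnj (inner_on T w v)"
  by (simp add: inner_on_def mult.commute)

lemma cnj_mult_self: "cnj z * z = complex_of_real ((cmod z)\<^sup>2)"
  by (metis complex_norm_square mult.commute)

lemma inner_on_self: "inner_on T v v = complex_of_real (\<Sum>c\<in>T. (cmod (v c))\<^sup>2)"
  unfolding inner_on_def by (simp add: cnj_mult_self)

lemma inner_on_self_Re_nonneg: "Re (inner_on T v v) \<ge> 0"
  by (simp add: inner_on_self sum_nonneg)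

lemma inner_on_self_eq_0:
  assumes "finite T" "v \<in> vecs T" "inner_on T v v = 0"
  shows "v = (\<lambda>_. 0)"
proof
  fix c
  have "(\<Sum>c\<in>T. (cmod (v c))\<^sup>2) = 0"
    using assms(3) by (simp only: inner_on_self of_real_eq_0_iff)
  hence "\<forall>c\<in>T. (cmod (v c))\<^sup>2 = 0" using assms(1) by (simp add: sum_nonneg_eq_0_iff)
  thus "v c = 0" using assms(2) by (cases "c \<in> T") (auto simp: vecs_def)
qed

lemma norm_inner_on_le:
  "cmod (inner_on T w v) \<le> (\<Sum>c\<in>T. (cmod (w c))\<^sup>2) / 2 + (\<Sum>c\<in>T. (cmod (v c))\<^sup>2) / 2"
proof -
  have "cmod (inner_on T w v) \<le> (\<Sum>c\<in>T. cmod (cnj (w c) * v c))"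
    unfolding inner_on_def by (rule norm_sum)
  also have "\<dots> \<le> (\<Sum>c\<in>T. (cmod (w c))\<^sup>2 / 2 + (cmod (v c))\<^sup>2 / 2)"
  proof (rule sum_mono)
    fix c
    have "0 \<le> (cmod (w c) - cmod (v c))\<^sup>2" by simp
    thus "cmod (cnj (w c) * v c) \<le> (cmod (w c))\<^sup>2 / 2 + (cmod (v c))\<^sup>2 / 2"
      by (simp add: norm_mult power2_diff field_simps)
  qed
  also have "\<dots> = (\<Sum>c\<in>T. (cmod (w c))\<^sup>2) / 2 + (\<Sum>c\<in>T. (cmod (v c))\<^sup>2) / 2"
    by (simp add: sum.distrib sum_divide_distrib)
  finally show ?thesis .
qed

definition basis_vec :: "cfg \<Rightarrow> vect" where
  "basis_vec c = (\<lambda>i. if i = c then 1 else 0)"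

lemma basis_vec_in_vecs: "j \<in> T \<Longrightarrow> basis_vec j \<in> vecs T"
  by (simp add: basis_vec_def vecs_def)

lemma inner_on_basis_vec_right:
  assumes "finite T" "c \<in> T"
  shows "inner_on T e (basis_vec c) = cnj (e c)"
proof -
  have "inner_on T e (basis_vec c) = (\<Sum>c'\<in>T. if c' = c then cnj (e c) else 0)"
    unfolding inner_on_def basis_vec_def by (rule sum.cong) auto
  thus ?thesis using assms by simp
qed

lemma inner_on_basis_vec_left:
  assumes "finite T" "c \<in> T"
  shows "inner_on T (basis_vec c) e = e c"
proof -
  have "inner_on T (basis_vec c) e = (\<Sum>c'\<in>T. if c' = c then e c else 0)"
    unfolding inner_on_def basis_vec_def by (rule sum.cong) auto
  thus ?thesis using assms by simp
qed

definition csubspace :: "vect set \<Rightarrow> bool" where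
  "csubspace K \<longleftrightarrow> (\<lambda>_. 0) \<in> K \<and> (\<forall>u\<in>K. \<forall>v\<in>K. (\<lambda>i. u i + v i) \<in> K) \<and> (\<forall>a. \<forall>u\<in>K. (\<lambda>i. a * u i) \<in> K)"

lemma csubspace_sum:
  assumes "csubspace K" "\<And>e. e \<in> F \<Longrightarrow> f e \<in> K"
  shows "(\<lambda>i. \<Sum>e\<in>F. f e i) \<in> K"
proof (cases "finite F")
  case True
  thus ?thesis using assms(2)
  proof (induction F rule: finite_induct)
    case empty thus ?case using assms(1) by (simp add: csubspace_def)
  next
    case (insert x F) thus ?case using assms(1) unfolding csubspace_def by simp
  qed
next
  case False thus ?thesis using assms(1) by (simp add: csubspace_def)
qed

lemma csubspace_lincomb:
  assumes "csubspace K" "F \<subseteq> K"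
  shows "(\<lambda>i. \<Sum>e\<in>F. a e * e i) \<in> K"
  by (rule csubspace_sum[OF assms(1)]) (use assms in \<open>auto simp: csubspace_def\<close>)

lemma csubspace_diff:
  assumes "csubspace K" "u \<in> K" "v \<in> K"
  shows "(\<lambda>i. u i - v i) \<in> K"
proof -
  have "(\<lambda>i. (-1) * v i) \<in> K" using assms unfolding csubspace_def by blast
  hence "(\<lambda>i. u i + (-1) * v i) \<in> K" using assms unfolding csubspace_def by fastforce
  thus ?thesis by simp
qed

lemma csubspace_vecs: "csubspace (vecs T)"
  unfolding csubspace_def by (simp add: vecs_def)

lemma csubspace_ominus: "csubspace K \<Longrightarrow> csubspace (ominus S K X)"
  unfolding csubspace_def ominus_def by (auto simp: inner_on_add_right inner_on_scale_right)

lemma csubspace_Inter_vecs: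
  assumes "\<And>k. k < M \<Longrightarrow> csubspace (Q k)"
  shows "csubspace {v \<in> vecs S. \<forall>k<M. v \<in> Q k}"
  using assms csubspace_vecs unfolding csubspace_def by auto

lemma csubspace_cspan: "csubspace (cspan X)"
  unfolding csubspace_def
proof (intro conjI ballI allI)
  show "(\<lambda>_. 0) \<in> cspan X"
    unfolding cspan_def by (intro CollectI exI[of _ "{}"]) simp
next
  fix u v assume "u \<in> cspan X" "v \<in> cspan X"
  then obtain F1 a1 F2 a2 where F1: "finite F1" "F1 \<subseteq> X" "u = (\<lambda>i. \<Sum>x\<in>F1. a1 x * x i)"
    and F2: "finite F2" "F2 \<subseteq> X" "v = (\<lambda>i. \<Sum>x\<in>F2. a2 x * x i)"
    unfolding cspan_def by blast
  define a where "a x = (if x \<in> F1 then a1 x else 0) + (if x \<in> F2 then a2 x else 0)" for x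
  have extend: "(\<Sum>x\<in>F1 \<union> F2. (if x \<in> F then b x else 0) * x i) = (\<Sum>x\<in>F. b x * x i)"
    if "F = F1 \<or> F = F2" for F b i
  proof -
    have "(\<Sum>x\<in>F1 \<union> F2. (if x \<in> F then b x else 0) * x i) = (\<Sum>x\<in>(F1 \<union> F2) \<inter> F. b x * x i)"
      unfolding sum.inter_restrict[OF finite_UnI[OF F1(1) F2(1)]] by (intro sum.cong) auto
    also have "(F1 \<union> F2) \<inter> F = F" using that by blast
    finally show ?thesis .
  qed
  have e1: "(\<Sum>x\<in>F1 \<union> F2. (if x \<in> F1 then a1 x else 0) * x i) = (\<Sum>x\<in>F1. a1 x * x i)" for i
    by (rule extend) simp
  have e2: "(\<Sum>x\<in>F1 \<union> F2. (if x \<in> F2 then a2 x else 0) * x i) = (\<Sum>x\<in>F2. a2 x * x i)" for i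
    by (rule extend) simp
  have "(\<lambda>i. u i + v i) = (\<lambda>i. \<Sum>x\<in>F1 \<union> F2. a x * x i)"
    unfolding a_def distrib_right sum.distrib e1 e2 F1(3) F2(3) ..
  thus "(\<lambda>i. u i + v i) \<in> cspan X"
    unfolding cspan_def
    by (intro CollectI exI[of _ "F1 \<union> F2"] exI[of _ a] conjI) (use F1(1,2) F2(1,2) in auto)
next
  fix c u assume "u \<in> cspan X"
  then obtain F a where F: "finite F" "F \<subseteq> X" "u = (\<lambda>i. \<Sum>x\<in>F. a x * x i)"
    unfolding cspan_def by blast
  have "(\<lambda>i. c * u i) = (\<lambda>i. \<Sum>x\<in>F. (c * a x) * x i)"
    using F(3) by (simp add: sum_distrib_left mult.assoc)
  thus "(\<lambda>i. c * u i) \<in> cspan X"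
    unfolding cspan_def by (intro CollectI exI[of _ F] exI[of _ "\<lambda>x. c * a x"] conjI) (use F(1,2) in auto)
qed

lemma in_cspan: "x \<in> X \<Longrightarrow> x \<in> cspan X"
  unfolding cspan_def by (intro CollectI exI[of _ "{x}"] exI[of _ "\<lambda>_. 1"]) auto

definition orthonormal_on :: "cfg set \<Rightarrow> vect set \<Rightarrow> bool" where
  "orthonormal_on T F \<longleftrightarrow> (\<forall>e\<in>F. \<forall>e'\<in>F. inner_on T e e' = (if e = e' then 1 else 0))"

lemma orthonormal_on_coefficient:
  assumes "orthonormal_on T F" "finite F" "e' \<in> F"
  shows "inner_on T e' (\<lambda>i. \<Sum>e\<in>F. a e * e i) = a e'"
proof -
  have "inner_on T e' (\<lambda>i. \<Sum>e\<in>F. a e * e i) = (\<Sum>e\<in>F. a e * inner_on T e' e)"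
    by (simp add: inner_on_sum_right inner_on_scale_right)
  also have "\<dots> = (\<Sum>e\<in>F. if e = e' then a e else 0)"
    using assms(1,3) by (intro sum.cong) (auto simp: orthonormal_on_def)
  also have "\<dots> = a e'" using assms(2,3) by (simp add: sum.delta')
  finally show ?thesis .
qed

lemma orthonormal_on_residual_orth:
  assumes "orthonormal_on T F" "finite F" "e' \<in> F"
  shows "inner_on T e' (\<lambda>i. v i - (\<Sum>e\<in>F. inner_on T e v * e i)) = 0"
  using orthonormal_on_coefficient[OF assms, of "\<lambda>e. inner_on T e v"]
  by (simp add: inner_on_diff_right)

lemma bessel_inequality:
  assumes "orthonormal_on T F" "finite F"
  shows "(\<Sum>e\<in>F. (cmod (inner_on T e v))\<^sup>2) \<le> Re (inner_on T v v)"
proof -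
  define r where "r = (\<lambda>i. v i - (\<Sum>e\<in>F. inner_on T e v * e i))"
  have r_orth: "inner_on T r e = 0" if "e \<in> F" for e
    using orthonormal_on_residual_orth[OF assms that, of v] inner_on_commute[of T r e]
    by (simp add: r_def)
  have "inner_on T r r = inner_on T r v - (\<Sum>e\<in>F. inner_on T e v * inner_on T r e)"
    by (simp add: r_def[of] inner_on_diff_right inner_on_sum_right inner_on_scale_right)
  also have "\<dots> = inner_on T r v" using r_orth by simp
  also have "\<dots> = inner_on T v v - (\<Sum>e\<in>F. cnj (inner_on T e v) * inner_on T e v)"
    by (simp add: r_def inner_on_diff_left inner_on_sum_left inner_on_scale_left)
  also have "\<dots> = inner_on T v v - complex_of_real (\<Sum>e\<in>F. (cmod (inner_on T e v))\<^sup>2)"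
    by (simp add: cnj_mult_self)
  finally have "Re (inner_on T r r) = Re (inner_on T v v) - (\<Sum>e\<in>F. (cmod (inner_on T e v))\<^sup>2)"
    by simp
  thus ?thesis using inner_on_self_Re_nonneg[of T r] by linarith
qed

text \<open>Bessel's inequality applied to the basis vectors bounds the size of an orthonormal family.\<close>
lemma orthonormal_on_card_le:
  assumes "finite T" "orthonormal_on T F" "finite F" "F \<subseteq> vecs T"
  shows "card F \<le> card T"
proof -
  have column: "(\<Sum>e\<in>F. (cmod (e c))\<^sup>2) \<le> 1" if "c \<in> T" for c
  proof -
    have "inner_on T (basis_vec c) (basis_vec c) = 1"
      using inner_on_basis_vec_left[OF assms(1) that] by (simp add: basis_vec_def)
    thus ?thesis using bessel_inequality[OF assms(2,3), of "basis_vec c"] assms(1) that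
      by (simp add: inner_on_basis_vec_right)
  qed
  have "real (card F) = (\<Sum>e\<in>F. Re (inner_on T e e))"
    using assms(2) by (simp add: orthonormal_on_def)
  also have "\<dots> = (\<Sum>c\<in>T. \<Sum>e\<in>F. (cmod (e c))\<^sup>2)"
    by (simp add: inner_on_self) (rule sum.swap)
  also have "\<dots> \<le> (\<Sum>c\<in>T. 1)" using column by (intro sum_mono) auto
  finally show ?thesis by simp
qed

lemma orthonormal_on_insert_residual:
  assumes T: "finite T" and K: "csubspace K" "K \<subseteq> vecs T"
    and F: "finite F" "F \<subseteq> K" "orthonormal_on T F"
    and v: "v \<in> K" and r_nz: "(\<lambda>i. v i - (\<Sum>e\<in>F. inner_on T e v * e i)) \<noteq> (\<lambda>_. 0)"
  shows "\<exists>e0\<in>K. e0 \<notin> F \<and> orthonormal_on T (insert e0 F)"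
proof -
  define r where "r = (\<lambda>i. v i - (\<Sum>e\<in>F. inner_on T e v * e i))"
  have rK: "r \<in> K"
    unfolding r_def by (rule csubspace_diff[OF K(1) v csubspace_lincomb[OF K(1) F(2)]])
  define s where "s = (\<Sum>c\<in>T. (cmod (r c))\<^sup>2)"
  have rr: "inner_on T r r = complex_of_real s" by (simp add: inner_on_self s_def)
  have "s \<noteq> 0" using inner_on_self_eq_0[OF T] rK K(2) r_nz rr r_def by auto
  hence s_pos: "s > 0" unfolding s_def by (simp add: less_le sum_nonneg)
  define e0 where "e0 = (\<lambda>i. complex_of_real (1 / sqrt s) * r i)"
  have e0K: "e0 \<in> K" using K(1) rK unfolding e0_def csubspace_def by blast
  have e0_unit: "inner_on T e0 e0 = 1"
  proof -
    have "inner_on T e0 e0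
        = complex_of_real (1 / sqrt s) * complex_of_real (1 / sqrt s) * complex_of_real s"
      unfolding e0_def
      by (simp only: inner_on_scale_left inner_on_scale_right rr complex_cnj_complex_of_real mult.assoc)
    also have "\<dots> = complex_of_real ((1 / sqrt s) * (1 / sqrt s) * s)" by (simp only: of_real_mult)
    also have "(1 / sqrt s) * (1 / sqrt s) * s = 1" using s_pos by (simp add: field_simps)
    finally show ?thesis by simp
  qed
  have orth: "inner_on T e e0 = 0" if "e \<in> F" for e
    unfolding e0_def inner_on_scale_right r_def
    using orthonormal_on_residual_orth[OF F(3,1) that] by simp
  have orth': "inner_on T e0 e = 0" if "e \<in> F" for e
    using orth[OF that] inner_on_commute[of T e0 e] by simp
  have e0F: "e0 \<notin> F"
  proof
    assume "e0 \<in> F"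
    hence "inner_on T e0 e0 = 0" by (rule orth)
    thus False using e0_unit by simp
  qed
  have "orthonormal_on T (insert e0 F)"
    unfolding orthonormal_on_def
  proof (intro ballI)
    fix e e' assume "e \<in> insert e0 F" "e' \<in> insert e0 F"
    thus "inner_on T e e' = (if e = e' then 1 else 0)"
      using F(3) e0_unit orth orth' e0F unfolding orthonormal_on_def by (elim insertE) auto
  qed
  thus ?thesis using e0K e0F by blast
qed

text \<open>A maximal orthonormal family in K exists, since orthonormal families are no larger than T;
  maximality forces every vector of K to equal its Fourier expansion.\<close>
lemma orthonormal_basis_exists:
  assumes T: "finite T" and K: "csubspace K" "K \<subseteq> vecs T"
  shows "\<exists>F. finite F \<and> F \<subseteq> K \<and> orthonormal_on T F \<and>
             (\<forall>v\<in>K. v = (\<lambda>i. \<Sum>e\<in>F. inner_on T e v * e i))"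
proof -
  define good where "good F \<longleftrightarrow> finite F \<and> F \<subseteq> K \<and> orthonormal_on T F" for F
  define P where "P k \<longleftrightarrow> (\<exists>F. good F \<and> card F = k)" for k
  have "P 0" unfolding P_def good_def orthonormal_on_def by (rule exI[of _ "{}"]) auto
  moreover have "\<forall>k. P k \<longrightarrow> k \<le> card T"
    unfolding P_def good_def using orthonormal_on_card_le[OF T] K(2) by blast
  ultimately obtain k where "P k" and k_max: "\<forall>k'. P k' \<longrightarrow> k' \<le> k"
    using Nat.ex_has_greatest_nat[of P 0 "card T"] by blast
  then obtain F where F: "finite F" "F \<subseteq> K" "orthonormal_on T F" and card_F: "card F = k"
    unfolding P_def good_def by blast
  have "v = (\<lambda>i. \<Sum>e\<in>F. inner_on T e v * e i)" if v: "v \<in> K" for v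
  proof (rule ccontr)
    assume "v \<noteq> (\<lambda>i. \<Sum>e\<in>F. inner_on T e v * e i)"
    hence "(\<lambda>i. v i - (\<Sum>e\<in>F. inner_on T e v * e i)) \<noteq> (\<lambda>_. 0)"
      by (simp add: fun_eq_iff)
    then obtain e0 where "e0 \<in> K" "e0 \<notin> F" "orthonormal_on T (insert e0 F)"
      using orthonormal_on_insert_residual[OF T K F v] by blast
    hence "P (Suc k)" unfolding P_def good_def using F card_F
      by (intro exI[of _ "insert e0 F"]) simp
    thus False using k_max Suc_n_not_le_n by blast
  qed
  thus ?thesis using F by blast
qed

lemma orth_decomposition_exists:
  assumes T: "finite T" and K: "csubspace K" "K \<subseteq> vecs T"
  shows "\<exists>F. finite F \<and> F \<subseteq> K \<and>
     (\<forall>v. (\<lambda>i. \<Sum>e\<in>F. inner_on T e v * e i) \<in> K \<and>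
          (\<forall>w\<in>K. inner_on T w (\<lambda>i. v i - (\<Sum>e\<in>F. inner_on T e v * e i)) = 0))"
proof -
  obtain F where F: "finite F" "F \<subseteq> K" "orthonormal_on T F"
      "\<forall>v\<in>K. v = (\<lambda>i. \<Sum>e\<in>F. inner_on T e v * e i)"
    using orthonormal_basis_exists[OF assms] by blast
  have "inner_on T w (\<lambda>i. v i - (\<Sum>e\<in>F. inner_on T e v * e i)) = 0" if "w \<in> K" for v w
  proof -
    have "inner_on T w (\<lambda>i. v i - (\<Sum>e\<in>F. inner_on T e v * e i))
        = inner_on T (\<lambda>i. \<Sum>e\<in>F. inner_on T e w * e i) (\<lambda>i. v i - (\<Sum>e\<in>F. inner_on T e v * e i))"
      by (rule arg_cong[where f="\<lambda>u. inner_on T u _"]) (use F(4) that in blast)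
    also have "\<dots> = (\<Sum>e\<in>F. cnj (inner_on T e w) *
                      inner_on T e (\<lambda>i. v i - (\<Sum>e\<in>F. inner_on T e v * e i)))"
      by (simp add: inner_on_sum_left inner_on_scale_left)
    also have "\<dots> = 0" by (rule sum.neutral) (simp add: orthonormal_on_residual_orth[OF F(3,1)])
    finally show ?thesis .
  qed
  thus ?thesis using F(1,2) csubspace_lincomb[OF K(1) F(2)] by (intro exI[of _ F]) simp
qed

lemma orth_decomposition:
  assumes "finite T" "csubspace K" "K \<subseteq> vecs T"
  shows "\<exists>p\<in>K. \<forall>w\<in>K. inner_on T w (\<lambda>i. v i - p i) = 0"
proof -
  obtain F where "\<forall>v. (\<lambda>i. \<Sum>e\<in>F. inner_on T e v * e i) \<in> K \<and>
          (\<forall>w\<in>K. inner_on T w (\<lambda>i. v i - (\<Sum>e\<in>F. inner_on T e v * e i)) = 0)"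
    using orth_decomposition_exists[OF assms] by blast
  thus ?thesis by (intro bexI[of _ "\<lambda>i. \<Sum>e\<in>F. inner_on T e v * e i"]) simp_all
qed

lemma in_csubspace_if_orth_to_complement:
  assumes T: "finite T" and K: "csubspace K" "K \<subseteq> vecs T" and v: "v \<in> vecs T"
    and orth: "\<And>q. q \<in> vecs T \<Longrightarrow> (\<forall>w\<in>K. inner_on T w q = 0) \<Longrightarrow> inner_on T v q = 0"
  shows "v \<in> K"
proof -
  obtain p where pK: "p \<in> K" and p_orth: "\<forall>w\<in>K. inner_on T w (\<lambda>i. v i - p i) = 0"
    using orth_decomposition[OF T K] by blast
  define q where "q = (\<lambda>i. v i - p i)"
  have q: "q \<in> vecs T" using v pK K(2) unfolding q_def vecs_def by auto
  have "inner_on T v q = 0" using orth[OF q] p_orth q_def by simp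
  moreover have "inner_on T p q = 0" using p_orth pK q_def by simp
  ultimately have "inner_on T q q = 0" unfolding q_def by (simp add: inner_on_diff_left)
  hence "q = (\<lambda>_. 0)" using inner_on_self_eq_0[OF T q] by simp
  hence "v = p" unfolding q_def fun_eq_iff by simp
  thus ?thesis using pK by simp
qed

section \<open>Operators\<close>

lemma mapply_add: "mapply T A (\<lambda>i. u i + v i) = (\<lambda>i. mapply T A u i + mapply T A v i)"
  by (simp add: mapply_def distrib_left sum.distrib)

lemma mapply_scale: "mapply T A (\<lambda>i. a * u i) = (\<lambda>i. a * mapply T A u i)"
  by (simp add: mapply_def sum_distrib_left algebra_simps)

lemma mapply_zero: "mapply T A (\<lambda>_. 0) = (\<lambda>_. 0)"
  by (simp add: mapply_def)

lemma mapply_basis_vec: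
  assumes "finite T" "j \<in> T"
  shows "mapply T A (basis_vec j) = (\<lambda>i. A i j)"
proof
  fix i
  have "mapply T A (basis_vec j) i = (\<Sum>c\<in>T. if c = j then A i j else 0)"
    unfolding mapply_def basis_vec_def by (intro sum.cong refl) auto
  thus "mapply T A (basis_vec j) i = A i j" using assms by simp
qed

lemma vecs_add: "u \<in> vecs T \<Longrightarrow> v \<in> vecs T \<Longrightarrow> (\<lambda>i. u i + v i) \<in> vecs T"
  by (simp add: vecs_def)

lemma vecs_scale: "u \<in> vecs T \<Longrightarrow> (\<lambda>i. a * u i) \<in> vecs T"
  by (simp add: vecs_def)

lemma vecs_diff: "u \<in> vecs T \<Longrightarrow> v \<in> vecs T \<Longrightarrow> (\<lambda>i. u i - v i) \<in> vecs T"
  by (simp add: vecs_def)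

lemma inner_on_superset:
  assumes "finite T'" "T \<subseteq> T'" "v \<in> vecs T"
  shows "inner_on T' w v = inner_on T w v"
  unfolding inner_on_def
  by (rule sum.mono_neutral_left[symmetric]) (use assms in \<open>auto simp: vecs_def\<close>)

lemma mapply_in_supp: "v \<in> vecs T \<Longrightarrow> mapply T A v \<in> supp T A"
  unfolding supp_def by blast

lemma supp_subset_vecs: "(\<And>i j. i \<notin> T \<Longrightarrow> A i j = 0) \<Longrightarrow> supp T A \<subseteq> vecs T"
  unfolding supp_def vecs_def mapply_def by auto

lemma csubspace_supp: "csubspace (supp T A)"
  unfolding csubspace_def supp_def
proof (intro conjI ballI allI)
  show "(\<lambda>_. 0) \<in> mapply T A ` vecs T"
    by (rule image_eqI[of _ _ "\<lambda>_. 0"]) (simp_all add: mapply_zero vecs_def)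
next
  fix u v assume "u \<in> mapply T A ` vecs T" "v \<in> mapply T A ` vecs T"
  then obtain u' v' where "u' \<in> vecs T" "v' \<in> vecs T" "u = mapply T A u'" "v = mapply T A v'"
    by blast
  thus "(\<lambda>i. u i + v i) \<in> mapply T A ` vecs T"
    by (intro image_eqI[of _ _ "\<lambda>i. u' i + v' i"]) (simp_all add: mapply_add vecs_add)
next
  fix a u assume "u \<in> mapply T A ` vecs T"
  then obtain u' where "u' \<in> vecs T" "u = mapply T A u'" by blast
  thus "(\<lambda>i. a * u i) \<in> mapply T A ` vecs T"
    by (intro image_eqI[of _ _ "\<lambda>i. a * u' i"]) (simp_all add: mapply_scale vecs_scale)
qed

text \<open>Every vector orthogonal to the range is isotropic, so testing v against isotropic
  vectors suffices.\<close>
lemma in_supp_if_orth_to_isotropic: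
  assumes T: "finite T" and A: "\<And>i j. i \<notin> T \<Longrightarrow> A i j = 0" and v: "v \<in> vecs T"
    and orth: "\<And>q. q \<in> vecs T \<Longrightarrow> inner_on T q (mapply T A q) = 0 \<Longrightarrow> inner_on T v q = 0"
  shows "v \<in> supp T A"
proof (rule in_csubspace_if_orth_to_complement[OF T csubspace_supp supp_subset_vecs[OF A] v])
  fix q assume q: "q \<in> vecs T" and q_orth: "\<forall>w\<in>supp T A. inner_on T w q = 0"
  have "inner_on T (mapply T A q) q = 0" using q_orth mapply_in_supp[OF q] by blast
  hence "inner_on T q (mapply T A q) = 0" using inner_on_commute[of T q "mapply T A q"] by simp
  thus "inner_on T v q = 0" by (rule orth[OF q])
qed

definition is_orth_proj :: "cfg set \<Rightarrow> vect set \<Rightarrow> cmat \<Rightarrow> bool" where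
  "is_orth_proj T K P \<longleftrightarrow> supported_on T P \<and>
     (\<forall>v\<in>vecs T. mapply T P v \<in> K \<and> (\<forall>w\<in>K. inner_on T w (\<lambda>i. v i - mapply T P v i) = 0))"

lemma orth_proj_exists:
  assumes T: "finite T" and K: "csubspace K" "K \<subseteq> vecs T"
  shows "\<exists>P. is_orth_proj T K P"
proof -
  obtain F where F: "finite F" "F \<subseteq> K" "\<forall>v. (\<lambda>i. \<Sum>e\<in>F. inner_on T e v * e i) \<in> K \<and>
          (\<forall>w\<in>K. inner_on T w (\<lambda>i. v i - (\<Sum>e\<in>F. inner_on T e v * e i)) = 0)"
    using orth_decomposition_exists[OF assms] by blast
  define P where "P = (\<lambda>i j. if i \<in> T \<and> j \<in> T then (\<Sum>e\<in>F. e i * cnj (e j)) else 0)"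
  have P_apply: "mapply T P v = (\<lambda>i. \<Sum>e\<in>F. inner_on T e v * e i)" for v
  proof
    fix i
    show "mapply T P v i = (\<Sum>e\<in>F. inner_on T e v * e i)"
    proof (cases "i \<in> T")
      case True
      have "mapply T P v i = (\<Sum>j\<in>T. \<Sum>e\<in>F. e i * (cnj (e j) * v j))"
        unfolding mapply_def P_def using True by (simp add: sum_distrib_right mult.assoc)
      also have "\<dots> = (\<Sum>e\<in>F. e i * inner_on T e v)"
        by (subst sum.swap) (simp add: inner_on_def sum_distrib_left)
      finally show ?thesis by (simp add: mult.commute)
    next
      case False
      hence "\<forall>e\<in>F. e i = 0" using F(2) K(2) by (auto simp: vecs_def)
      hence "(\<Sum>e\<in>F. inner_on T e v * e i) = 0" by (intro sum.neutral) simp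
      thus ?thesis using False unfolding mapply_def P_def by simp
    qed
  qed
  have "supported_on T P" unfolding supported_on_def P_def by auto
  thus ?thesis using F(3) unfolding is_orth_proj_def by (intro exI[of _ P]) (simp add: P_apply)
qed

lemma proj_is_orth_proj:
  assumes "finite T" "csubspace K" "K \<subseteq> vecs T"
  shows "is_orth_proj T K (proj T K)"
proof -
  have "proj T K = (SOME P. is_orth_proj T K P)" by (simp only: proj_def is_orth_proj_def)
  thus ?thesis using someI_ex[OF orth_proj_exists[OF assms]] by simp
qed

lemma is_orth_proj_quadratic:
  assumes P: "is_orth_proj T K P" and v: "v \<in> vecs T"
  shows "inner_on T v (mapply T P v) = inner_on T (mapply T P v) (mapply T P v)"
proof -
  have PK: "mapply T P v \<in> K" and orth: "\<forall>w\<in>K. inner_on T w (\<lambda>i. v i - mapply T P v i) = 0"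
    using P v unfolding is_orth_proj_def by auto
  have "inner_on T (\<lambda>i. v i - mapply T P v i) (mapply T P v) = 0"
    using orth PK inner_on_commute[of T "\<lambda>i. v i - mapply T P v i" "mapply T P v"] by simp
  thus ?thesis by (simp add: inner_on_diff_left)
qed

lemma is_orth_proj_inner_left:
  assumes P: "is_orth_proj T K P" and v: "v \<in> vecs T" and w: "w \<in> K"
  shows "inner_on T w v = inner_on T w (mapply T P v)"
proof -
  have "inner_on T w (\<lambda>i. v i - mapply T P v i) = 0" using P v w unfolding is_orth_proj_def by auto
  thus ?thesis by (simp add: inner_on_diff_right)
qed

text \<open>Polarisation: test the form on the basis vectors and on e_i + e_j, e_i + \<i> e_j.\<close>
lemma psd_on_hermitian:
  assumes T: "finite T" and psd: "psd_on T A" and i: "i \<in> T" and j: "j \<in> T"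
  shows "A i j = cnj (A j i)"
proof -
  define B where "B u v = inner_on T u (mapply T A v)" for u v
  have B_basis: "B (basis_vec a) (basis_vec b) = A a b" if "a \<in> T" "b \<in> T" for a b
    unfolding B_def using that T by (simp add: mapply_basis_vec inner_on_basis_vec_left)
  have B_pair: "B (\<lambda>c. basis_vec i c + z * basis_vec j c) (\<lambda>c. basis_vec i c + z * basis_vec j c)
      = A i i + z * A i j + cnj z * A j i + cnj z * z * A j j" for z
    unfolding B_def
    by (simp add: mapply_add mapply_scale inner_on_add_left inner_on_add_right inner_on_scale_left
        inner_on_scale_right B_def[symmetric] B_basis i j algebra_simps)
  have Im_B: "Im (B v v) = 0" if "v \<in> vecs T" for v using psd that unfolding psd_on_def B_def by blast
  have pair_vecs: "(\<lambda>c. basis_vec i c + z * basis_vec j c) \<in> vecs T" for z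
    using i j by (intro vecs_add vecs_scale basis_vec_in_vecs)
  have "Im (A i i) = 0" using Im_B[OF basis_vec_in_vecs[OF i]] B_basis[OF i i] by simp
  moreover have "Im (A j j) = 0" using Im_B[OF basis_vec_in_vecs[OF j]] B_basis[OF j j] by simp
  ultimately have "Im (A i j + A j i) = 0" "Re (A i j - A j i) = 0"
    using Im_B[OF pair_vecs[of 1]] B_pair[of 1] Im_B[OF pair_vecs[of \<i>]] B_pair[of \<i>]
    by (simp_all add: cnj_mult_self)
  thus ?thesis by (simp add: complex_eq_iff)
qed

section \<open>Configurations, partial traces and tensor products\<close>

lemma finite_configs: "finite (configs n d)"
proof -
  let ?g = "\<lambda>f a. if a < n then f a else (0::nat)"
  have "configs n d \<subseteq> ?g ` (PiE {..<n} (\<lambda>a. {..<d a}))"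
  proof
    fix c assume c: "c \<in> configs n d"
    have "restrict c {..<n} \<in> PiE {..<n} (\<lambda>a. {..<d a})"
      using c by (simp add: configs_def)
    moreover have "c = ?g (restrict c {..<n})"
      using c by (auto simp: configs_def)
    ultimately show "c \<in> ?g ` (PiE {..<n} (\<lambda>a. {..<d a}))" by blast
  qed
  thus ?thesis by (rule finite_subset) (simp add: finite_PiE)
qed

lemma finite_sub_configs: "finite (sub_configs n d N)"
  unfolding sub_configs_def using finite_configs by simp

lemma sub_configs_subset_configs: "sub_configs n d N \<subseteq> configs n d"
  unfolding sub_configs_def configs_def restr_def by force

lemma restr_in_sub_configs: "c \<in> configs n d \<Longrightarrow> restr N c \<in> sub_configs n d N"
  unfolding sub_configs_def by blast

definition merge :: "nat set \<Rightarrow> cfg \<Rightarrow> cfg \<Rightarrow> cfg" where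
  "merge N x y = (\<lambda>a. if a \<in> N then x a else y a)"

lemma merge_in_configs:
  "x \<in> sub_configs n d N \<Longrightarrow> y \<in> sub_configs n d (- N) \<Longrightarrow> merge N x y \<in> configs n d"
  unfolding sub_configs_def configs_def merge_def restr_def by auto

lemma restr_merge_left: "x \<in> sub_configs n d N \<Longrightarrow> restr N (merge N x y) = x"
  unfolding sub_configs_def merge_def restr_def by auto

lemma restr_merge_right: "y \<in> sub_configs n d (- N) \<Longrightarrow> restr (- N) (merge N x y) = y"
  unfolding sub_configs_def merge_def restr_def by auto

lemma merge_restr: "merge N (restr N c) (restr (- N) c) = c"
  unfolding merge_def restr_def by auto

lemma sum_configs_split:
  "(\<Sum>c\<in>configs n d. f c) = (\<Sum>x\<in>sub_configs n d N. \<Sum>y\<in>sub_configs n d (- N). f (merge N x y))"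
proof -
  have "bij_betw (\<lambda>(x, y). merge N x y) (sub_configs n d N \<times> sub_configs n d (- N)) (configs n d)"
    by (rule bij_betw_byWitness[where f' = "\<lambda>c. (restr N c, restr (- N) c)"])
       (auto simp: restr_merge_left restr_merge_right merge_restr merge_in_configs restr_in_sub_configs)
  hence "(\<Sum>c\<in>configs n d. f c) = (\<Sum>(x, y)\<in>sub_configs n d N \<times> sub_configs n d (- N). f (merge N x y))"
    by (simp add: sum.reindex_bij_betw[symmetric] case_prod_beta')
  thus ?thesis by (simp add: sum.cartesian_product)
qed

lemma sum_configs_fiber:
  assumes y: "y \<in> sub_configs n d (- N)"
  shows "(\<Sum>c\<in>configs n d. if restr (- N) c = y then f c else 0)
       = (\<Sum>x\<in>sub_configs n d N. f (merge N x y))"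
proof -
  have "(\<Sum>c\<in>configs n d. if restr (- N) c = y then f c else 0)
      = (\<Sum>x\<in>sub_configs n d N. \<Sum>y'\<in>sub_configs n d (- N). if y' = y then f (merge N x y') else 0)"
    by (subst sum_configs_split[of _ _ _ N]) (intro sum.cong refl, simp add: restr_merge_right)
  also have "\<dots> = (\<Sum>x\<in>sub_configs n d N. f (merge N x y))"
    using y finite_sub_configs by (simp add: sum.delta')
  finally show ?thesis .
qed

lemma kron_id_apply:
  assumes c: "c \<in> configs n d"
  shows "mapply (configs n d) (kron_id n d N A) q c
       = (\<Sum>x'\<in>sub_configs n d N. A (restr N c) x' * q (merge N x' (restr (- N) c)))"
proof -
  have "mapply (configs n d) (kron_id n d N A) q c
      = (\<Sum>c'\<in>configs n d. if restr (- N) c' = restr (- N) c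
                             then A (restr N c) (restr N c') * q c' else 0)"
    unfolding mapply_def kron_id_def using c by (intro sum.cong refl) auto
  also have "\<dots> = (\<Sum>x'\<in>sub_configs n d N. A (restr N c) x' * q (merge N x' (restr (- N) c)))"
    by (subst sum_configs_fiber[OF restr_in_sub_configs[OF c]]) (simp add: restr_merge_left)
  finally show ?thesis .
qed

lemma ptrace_merge:
  "x \<in> sub_configs n d N \<Longrightarrow> x' \<in> sub_configs n d N \<Longrightarrow>
   ptrace n d N \<rho> x x' = (\<Sum>y\<in>sub_configs n d (- N). \<rho> (merge N x y) (merge N x' y))"
  unfolding ptrace_def merge_def by simp

lemma sum_sum_cnj_mult_self_eq_0D:
  assumes "finite Y" "(\<Sum>y\<in>Y. \<Sum>z\<in>Y. cnj (g y z) * g y z) = 0" "y \<in> Y" "z \<in> Y"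
  shows "g y z = (0::complex)"
proof -
  have "complex_of_real (\<Sum>y\<in>Y. \<Sum>z\<in>Y. (cmod (g y z))\<^sup>2) = 0"
    using assms(2) by (simp add: cnj_mult_self)
  hence "(\<Sum>y\<in>Y. \<Sum>z\<in>Y. (cmod (g y z))\<^sup>2) = 0" by (simp only: of_real_eq_0_iff)
  hence "(\<Sum>z\<in>Y. (cmod (g y z))\<^sup>2) = 0"
    using assms(1,3) by (subst (asm) sum_nonneg_eq_0_iff) (auto intro: sum_nonneg)
  hence "(cmod (g y z))\<^sup>2 = 0" using assms(1,4) by (subst (asm) sum_nonneg_eq_0_iff) auto
  thus ?thesis by simp
qed

lemma sum_quadratic_rearrange:
  fixes Q P :: "'x \<Rightarrow> 'y \<Rightarrow> complex"
  shows "(\<Sum>x\<in>X. \<Sum>y\<in>Y. cnj (Q x y) * (\<Sum>x'\<in>X. (\<Sum>z\<in>Y. P x z * cnj (P x' z)) * Q x' y))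
       = (\<Sum>y\<in>Y. \<Sum>z\<in>Y. cnj (\<Sum>x\<in>X. cnj (P x z) * Q x y) * (\<Sum>x\<in>X. cnj (P x z) * Q x y))"
proof -
  have "(\<Sum>x\<in>X. \<Sum>y\<in>Y. cnj (Q x y) * (\<Sum>x'\<in>X. (\<Sum>z\<in>Y. P x z * cnj (P x' z)) * Q x' y))
      = (\<Sum>x\<in>X. \<Sum>y\<in>Y. \<Sum>x'\<in>X. \<Sum>z\<in>Y. cnj (Q x y) * P x z * cnj (P x' z) * Q x' y)"
    by (simp add: sum_distrib_left sum_distrib_right mult.assoc)
  also have "\<dots> = (\<Sum>y\<in>Y. \<Sum>z\<in>Y. \<Sum>x\<in>X. \<Sum>x'\<in>X. cnj (Q x y) * P x z * cnj (P x' z) * Q x' y)"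
    by (subst sum.swap) (intro sum.cong refl, subst sum.swap, intro sum.cong refl, rule sum.swap)
  also have "\<dots> = (\<Sum>y\<in>Y. \<Sum>z\<in>Y. \<Sum>x\<in>X. \<Sum>x'\<in>X. (P x z * cnj (Q x y)) * (cnj (P x' z) * Q x' y))"
    by (intro sum.cong refl) (simp add: mult.commute mult.left_commute)
  also have "\<dots> = (\<Sum>y\<in>Y. \<Sum>z\<in>Y. cnj (\<Sum>x\<in>X. cnj (P x z) * Q x y) * (\<Sum>x\<in>X. cnj (P x z) * Q x y))"
    by (simp only: cnj_sum complex_cnj_mult complex_cnj_cnj sum_product)
  finally show ?thesis .
qed

text \<open>The quadratic form of \<rho>_N \<otimes> I at q is the sum of |g y z|^2 with
  g y z = \<Sum>_x cnj (\<Psi> (x,z)) q (x,y); if it vanishes then so does every g y y, and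
  \<langle>\<Psi>, q\<rangle> = \<Sum>_y g y y.\<close>
lemma in_supp_kron_ptrace_rho_d:
  assumes \<Psi>: "\<Psi> \<in> vecs (configs n d)"
  shows "\<Psi> \<in> supp (configs n d) (kron_id n d N (ptrace n d N (rho_d \<Psi>)))"
proof (rule in_supp_if_orth_to_isotropic[OF finite_configs _ \<Psi>])
  show "kron_id n d N (ptrace n d N (rho_d \<Psi>)) i j = 0" if "i \<notin> configs n d" for i j
    using that by (simp add: kron_id_def)
next
  let ?S = "configs n d" and ?X = "sub_configs n d N" and ?Y = "sub_configs n d (- N)"
  fix q assume "q \<in> vecs ?S"
    and isotropic: "inner_on ?S q (mapply ?S (kron_id n d N (ptrace n d N (rho_d \<Psi>))) q) = 0"
  let ?Q = "\<lambda>x y. q (merge N x y)" and ?P = "\<lambda>x z. \<Psi> (merge N x z)"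
  let ?g = "\<lambda>y z. \<Sum>x\<in>?X. cnj (?P x z) * ?Q x y"
  have "inner_on ?S q (mapply ?S (kron_id n d N (ptrace n d N (rho_d \<Psi>))) q)
      = (\<Sum>x\<in>?X. \<Sum>y\<in>?Y. cnj (?Q x y) * (\<Sum>x'\<in>?X. (\<Sum>z\<in>?Y. ?P x z * cnj (?P x' z)) * ?Q x' y))"
    unfolding inner_on_def
    by (subst sum_configs_split[of _ _ _ N], intro sum.cong refl)
       (simp add: kron_id_apply merge_in_configs restr_merge_left restr_merge_right ptrace_merge
         rho_d_def)
  also have "\<dots> = (\<Sum>y\<in>?Y. \<Sum>z\<in>?Y. cnj (?g y z) * ?g y z)" by (rule sum_quadratic_rearrange)
  finally have "(\<Sum>y\<in>?Y. \<Sum>z\<in>?Y. cnj (?g y z) * ?g y z) = 0" using isotropic by simp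
  note sum_sum_cnj_mult_self_eq_0D[OF finite_sub_configs this]
  hence g_diag: "?g y y = 0" if "y \<in> ?Y" for y using that by blast
  have "inner_on ?S \<Psi> q = (\<Sum>x\<in>?X. \<Sum>y\<in>?Y. cnj (?P x y) * ?Q x y)"
    unfolding inner_on_def by (rule sum_configs_split)
  also have "\<dots> = (\<Sum>y\<in>?Y. ?g y y)" by (rule sum.swap)
  also have "\<dots> = 0" using g_diag by simp
  finally show "inner_on ?S \<Psi> q = 0" .
qed

text \<open>For a configuration y of the complement of N, slice n d N w y is the vector x \<mapsto> w(x,y)
  of H_N and lift n d N q y is q \<otimes> e_y.\<close>
definition slice :: "nat \<Rightarrow> (nat \<Rightarrow> nat) \<Rightarrow> nat set \<Rightarrow> vect \<Rightarrow> cfg \<Rightarrow> vect" where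
  "slice n d N w y = (\<lambda>x. if x \<in> sub_configs n d N then w (merge N x y) else 0)"

definition lift :: "nat \<Rightarrow> (nat \<Rightarrow> nat) \<Rightarrow> nat set \<Rightarrow> vect \<Rightarrow> cfg \<Rightarrow> vect" where
  "lift n d N q y = (\<lambda>c. if c \<in> configs n d \<and> restr (- N) c = y then q (restr N c) else 0)"

lemma lift_in_vecs: "lift n d N q y \<in> vecs (configs n d)"
  by (simp add: lift_def vecs_def)

lemma inner_on_lift:
  assumes y: "y \<in> sub_configs n d (- N)"
  shows "inner_on (configs n d) w (lift n d N q y) = inner_on (sub_configs n d N) (slice n d N w y) q"
proof -
  have "inner_on (configs n d) w (lift n d N q y)
      = (\<Sum>c\<in>configs n d. if restr (- N) c = y then cnj (w c) * q (restr N c) else 0)"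
    unfolding inner_on_def lift_def by (intro sum.cong refl) auto
  also have "\<dots> = (\<Sum>x\<in>sub_configs n d N. cnj (w (merge N x y)) * q x)"
    by (subst sum_configs_fiber[OF y]) (simp add: restr_merge_left)
  also have "\<dots> = inner_on (sub_configs n d N) (slice n d N w y) q"
    unfolding inner_on_def slice_def by (intro sum.cong refl) auto
  finally show ?thesis .
qed

lemma mapply_lift:
  assumes y: "y \<in> sub_configs n d (- N)"
  shows "mapply (configs n d) P (lift n d N q y) c
       = (\<Sum>x'\<in>sub_configs n d N. P c (merge N x' y) * q x')"
proof -
  have "mapply (configs n d) P (lift n d N q y) c
      = (\<Sum>c'\<in>configs n d. if restr (- N) c' = y then P c c' * q (restr N c') else 0)"
    unfolding mapply_def lift_def by (intro sum.cong refl) auto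
  also have "\<dots> = (\<Sum>x'\<in>sub_configs n d N. P c (merge N x' y) * q x')"
    by (subst sum_configs_fiber[OF y]) (simp add: restr_merge_left)
  finally show ?thesis .
qed

lemma quadratic_lift:
  assumes y: "y \<in> sub_configs n d (- N)"
  shows "inner_on (configs n d) (lift n d N q y) (mapply (configs n d) P (lift n d N q y))
     = (\<Sum>x\<in>sub_configs n d N. cnj (q x) *
          (\<Sum>x'\<in>sub_configs n d N. P (merge N x y) (merge N x' y) * q x'))"
proof -
  have "inner_on (configs n d) (lift n d N q y) (mapply (configs n d) P (lift n d N q y))
     = (\<Sum>c\<in>configs n d. if restr (- N) c = y then cnj (q (restr N c)) *
           (\<Sum>x'\<in>sub_configs n d N. P c (merge N x' y) * q x') else 0)"
    unfolding inner_on_def mapply_lift[OF y] by (intro sum.cong refl) (simp add: lift_def)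
  also have "\<dots> = (\<Sum>x\<in>sub_configs n d N. cnj (q x) *
                     (\<Sum>x'\<in>sub_configs n d N. P (merge N x y) (merge N x' y) * q x'))"
    by (subst sum_configs_fiber[OF y]) (simp add: restr_merge_left)
  finally show ?thesis .
qed

lemma ptrace_quadratic_eq_sum_lift:
  "inner_on (sub_configs n d N) q (mapply (sub_configs n d N) (ptrace n d N P) q)
     = (\<Sum>y\<in>sub_configs n d (- N).
          inner_on (configs n d) (lift n d N q y) (mapply (configs n d) P (lift n d N q y)))"
proof -
  let ?X = "sub_configs n d N" and ?Y = "sub_configs n d (- N)"
  have "inner_on ?X q (mapply ?X (ptrace n d N P) q)
      = (\<Sum>x\<in>?X. cnj (q x) * (\<Sum>x'\<in>?X. \<Sum>y\<in>?Y. P (merge N x y) (merge N x' y) * q x'))"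
    unfolding inner_on_def mapply_def
    by (intro sum.cong refl) (simp add: ptrace_merge sum_distrib_right)
  also have "\<dots> = (\<Sum>x\<in>?X. \<Sum>y\<in>?Y. cnj (q x) * (\<Sum>x'\<in>?X. P (merge N x y) (merge N x' y) * q x'))"
    by (simp add: sum_distrib_left sum.swap[of _ ?X ?Y])
  also have "\<dots> = (\<Sum>y\<in>?Y. inner_on (configs n d) (lift n d N q y) (mapply (configs n d) P (lift n d N q y)))"
    by (subst sum.swap) (simp add: quadratic_lift)
  finally show ?thesis .
qed

text \<open>The slices of a vector of a subspace K lie in the support of the partial trace of the
  projector onto K: if q is isotropic for that partial trace, the projector kills every
  q \<otimes> e_y, because the partial quadratic form is a sum of the squared norms of these images.\<close>
lemma slice_in_supp_ptrace_proj:
  assumes K: "K \<subseteq> vecs (configs n d)" and P: "is_orth_proj (configs n d) K P"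
    and w: "w \<in> K" and y: "y \<in> sub_configs n d (- N)"
  shows "slice n d N w y \<in> supp (sub_configs n d N) (ptrace n d N P)"
proof (rule in_supp_if_orth_to_isotropic[OF finite_sub_configs])
  show "ptrace n d N P i j = 0" if "i \<notin> sub_configs n d N" for i j
    using that by (simp add: ptrace_def)
  show "slice n d N w y \<in> vecs (sub_configs n d N)" by (simp add: slice_def vecs_def)
next
  let ?S = "configs n d" and ?Y = "sub_configs n d (- N)"
  fix q assume isotropic:
    "inner_on (sub_configs n d N) q (mapply (sub_configs n d N) (ptrace n d N P) q) = 0"
  define Pq where "Pq y' = mapply ?S P (lift n d N q y')" for y'
  have "complex_of_real (\<Sum>y'\<in>?Y. \<Sum>c\<in>?S. (cmod (Pq y' c))\<^sup>2) = 0"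
    using isotropic
    by (simp add: ptrace_quadratic_eq_sum_lift is_orth_proj_quadratic[OF P lift_in_vecs]
        inner_on_self Pq_def)
  hence "(\<Sum>y'\<in>?Y. \<Sum>c\<in>?S. (cmod (Pq y' c))\<^sup>2) = 0" by (simp only: of_real_eq_0_iff)
  hence "(\<Sum>c\<in>?S. (cmod (Pq y c))\<^sup>2) = 0"
    using finite_sub_configs y by (subst (asm) sum_nonneg_eq_0_iff) (auto intro: sum_nonneg)
  hence "inner_on ?S (Pq y) (Pq y) = 0" by (simp add: inner_on_self)
  moreover have "Pq y \<in> vecs ?S"
    using P K lift_in_vecs unfolding is_orth_proj_def Pq_def by blast
  ultimately have Pq_y: "Pq y = (\<lambda>_. 0)" using inner_on_self_eq_0[OF finite_configs] by blast
  have "inner_on (sub_configs n d N) (slice n d N w y) q = inner_on ?S w (lift n d N q y)"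
    by (rule inner_on_lift[OF y, symmetric])
  also have "\<dots> = inner_on ?S w (Pq y)"
    unfolding Pq_def by (rule is_orth_proj_inner_left[OF P lift_in_vecs w])
  finally show "inner_on (sub_configs n d N) (slice n d N w y) q = 0" using Pq_y by simp
qed

lemma in_tensor_full_if_slices:
  assumes w: "w \<in> vecs (configs n d)"
    and slices: "\<And>y. y \<in> sub_configs n d (- N) \<Longrightarrow> slice n d N w y \<in> K"
  shows "w \<in> tensor_full n d N K"
proof -
  let ?G = "{(\<lambda>c. if c \<in> configs n d then v (restr N c) * u (restr (- N) c) else 0)
              | v u. v \<in> K \<and> u \<in> vecs (sub_configs n d (- N))}"
  let ?f = "\<lambda>y c. if c \<in> configs n d
                   then slice n d N w y (restr N c) * basis_vec y (restr (- N) c) else 0"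
  have "?f y \<in> ?G" if "y \<in> sub_configs n d (- N)" for y
    using slices[OF that] basis_vec_in_vecs[OF that] by blast
  hence "(\<lambda>i. \<Sum>y\<in>sub_configs n d (- N). ?f y i) \<in> cspan ?G"
    by (intro csubspace_sum[OF csubspace_cspan] in_cspan)
  moreover have "w = (\<lambda>i. \<Sum>y\<in>sub_configs n d (- N). ?f y i)"
  proof
    fix c
    show "w c = (\<Sum>y\<in>sub_configs n d (- N). ?f y c)"
    proof (cases "c \<in> configs n d")
      case True
      hence "(\<Sum>y\<in>sub_configs n d (- N). ?f y c) = slice n d N w (restr (- N) c) (restr N c)"
        using finite_sub_configs restr_in_sub_configs[OF True]
        by (simp add: basis_vec_def if_distrib[of "\<lambda>x. _ * x"] sum.delta cong: if_cong)
      also have "\<dots> = w c"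
        using restr_in_sub_configs[OF True] by (simp add: slice_def merge_restr)
      finally show ?thesis by simp
    next
      case False thus ?thesis using w by (simp add: vecs_def)
    qed
  qed
  ultimately show ?thesis unfolding tensor_full_def by simp
qed

section \<open>The Lindblad evolution\<close>

text \<open>The entrywise l1 norm: submultiplicative and dominating every entry, which is all the
  convergence of the exponential series needs.\<close>
definition mnorm1 :: "cfg set \<Rightarrow> cmat \<Rightarrow> real" where
  "mnorm1 S X = (\<Sum>i\<in>S. \<Sum>j\<in>S. cmod (X i j))"

lemma mnorm1_nonneg: "mnorm1 S X \<ge> 0"
  unfolding mnorm1_def by (intro sum_nonneg) auto

lemma norm_entry_le_mnorm1:
  assumes "finite S" "i \<in> S" "j \<in> S"
  shows "cmod (X i j) \<le> mnorm1 S X"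
proof -
  have "cmod (X i j) \<le> (\<Sum>j\<in>S. cmod (X i j))"
    using assms by (intro member_le_sum) auto
  also have "\<dots> \<le> mnorm1 S X"
    unfolding mnorm1_def using assms by (intro member_le_sum) (auto intro: sum_nonneg)
  finally show ?thesis .
qed

lemma mnorm1_mmul_le:
  assumes S: "finite S"
  shows "mnorm1 S (mmul S A B) \<le> mnorm1 S A * mnorm1 S B"
proof -
  have "mnorm1 S (mmul S A B) \<le> (\<Sum>i\<in>S. \<Sum>j\<in>S. \<Sum>c\<in>S. cmod (A i c) * cmod (B c j))"
    unfolding mnorm1_def mmul_def
    by (intro sum_mono, rule order_trans[OF norm_sum]) (simp add: norm_mult)
  also have "\<dots> = (\<Sum>i\<in>S. \<Sum>c\<in>S. cmod (A i c) * (\<Sum>j\<in>S. cmod (B c j)))"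
    by (rule sum.cong[OF refl]) (subst sum.swap, simp add: sum_distrib_left)
  also have "\<dots> \<le> (\<Sum>i\<in>S. \<Sum>c\<in>S. cmod (A i c) * mnorm1 S B)"
    unfolding mnorm1_def using S
    by (intro sum_mono mult_left_mono member_le_sum[of _ S "\<lambda>i. \<Sum>j\<in>S. cmod (B i j)"])
       (auto intro: sum_nonneg)
  also have "\<dots> = mnorm1 S A * mnorm1 S B" unfolding mnorm1_def by (simp add: sum_distrib_right)
  finally show ?thesis .
qed

lemma mnorm1_adj: "mnorm1 S (adj A) = mnorm1 S A"
  unfolding mnorm1_def adj_def by (simp, rule sum.swap)

lemma mnorm1_sum_le: "mnorm1 S (\<lambda>i j. \<Sum>k\<in>F. X k i j) \<le> (\<Sum>k\<in>F. mnorm1 S (X k))"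
proof -
  have "mnorm1 S (\<lambda>i j. \<Sum>k\<in>F. X k i j) \<le> (\<Sum>i\<in>S. \<Sum>j\<in>S. \<Sum>k\<in>F. cmod (X k i j))"
    unfolding mnorm1_def by (intro sum_mono norm_sum)
  also have "\<dots> = (\<Sum>i\<in>S. \<Sum>k\<in>F. \<Sum>j\<in>S. cmod (X k i j))"
    by (intro sum.cong refl) (rule sum.swap)
  also have "\<dots> = (\<Sum>k\<in>F. mnorm1 S (X k))"
    unfolding mnorm1_def by (rule sum.swap)
  finally show ?thesis .
qed

lemma mnorm1_dissipator_term_le:
  "mnorm1 S (\<lambda>i j. A i j - (1/2) * (B i j + C i j))
     \<le> mnorm1 S A + mnorm1 S B / 2 + mnorm1 S C / 2"
proof -
  have "cmod (a - (1/2) * (b + c)) \<le> cmod a + cmod b / 2 + cmod c / 2" for a b c :: complex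
  proof -
    have "cmod (a - (1/2) * (b + c)) \<le> cmod a + cmod (b + c) / 2"
      using norm_triangle_ineq4[of a "(1/2) * (b + c)"] by (simp add: norm_mult)
    thus ?thesis using norm_triangle_ineq[of b c] by simp
  qed
  hence "mnorm1 S (\<lambda>i j. A i j - (1/2) * (B i j + C i j))
      \<le> (\<Sum>i\<in>S. \<Sum>j\<in>S. cmod (A i j) + cmod (B i j) / 2 + cmod (C i j) / 2)"
    unfolding mnorm1_def by (intro sum_mono)
  thus ?thesis by (simp add: mnorm1_def sum.distrib sum_divide_distrib)
qed

lemma mnorm1_lindblad0_le:
  assumes S: "finite S"
  shows "mnorm1 S (lindblad0 S M K X) \<le> (\<Sum>k<M. 2 * (mnorm1 S (K k))\<^sup>2) * mnorm1 S X"
proof -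
  have sandwich: "mnorm1 S (mmul S (mmul S A X) B) \<le> mnorm1 S A * mnorm1 S X * mnorm1 S B"
    and left: "mnorm1 S (mmul S (mmul S A B) X) \<le> mnorm1 S A * mnorm1 S B * mnorm1 S X"
    and right: "mnorm1 S (mmul S X (mmul S A B)) \<le> mnorm1 S A * mnorm1 S B * mnorm1 S X" for A B
  proof -
    note le = mnorm1_mmul_le[OF S] and nn = mnorm1_nonneg
    show "mnorm1 S (mmul S (mmul S A X) B) \<le> mnorm1 S A * mnorm1 S X * mnorm1 S B"
      by (rule order_trans[OF le mult_right_mono[OF le nn]])
    show "mnorm1 S (mmul S (mmul S A B) X) \<le> mnorm1 S A * mnorm1 S B * mnorm1 S X"
      by (rule order_trans[OF le mult_right_mono[OF le nn]])
    show "mnorm1 S (mmul S X (mmul S A B)) \<le> mnorm1 S A * mnorm1 S B * mnorm1 S X"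
      using order_trans[OF le[of X "mmul S A B"] mult_left_mono[OF le[of A B] nn]]
      by (simp add: mult_ac)
  qed
  have "mnorm1 S (lindblad0 S M K X)
      \<le> (\<Sum>k<M. mnorm1 S (mmul S (mmul S (K k) X) (adj (K k)))
                + mnorm1 S (mmul S (mmul S (adj (K k)) (K k)) X) / 2
                + mnorm1 S (mmul S X (mmul S (adj (K k)) (K k))) / 2)"
    unfolding lindblad0_def by (rule order_trans[OF mnorm1_sum_le sum_mono[OF mnorm1_dissipator_term_le]])
  also have "\<dots> \<le> (\<Sum>k<M. 2 * (mnorm1 S (K k))\<^sup>2 * mnorm1 S X)"
  proof (rule sum_mono)
    fix k
    show "mnorm1 S (mmul S (mmul S (K k) X) (adj (K k)))
          + mnorm1 S (mmul S (mmul S (adj (K k)) (K k)) X) / 2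
          + mnorm1 S (mmul S X (mmul S (adj (K k)) (K k))) / 2
          \<le> 2 * (mnorm1 S (K k))\<^sup>2 * mnorm1 S X"
      using sandwich[of "K k" "adj (K k)"] left[of "adj (K k)" "K k"] right[of "adj (K k)" "K k"]
      unfolding mnorm1_adj power2_eq_square mult.commute[of _ "mnorm1 S X"] mult.left_commute[of _ "mnorm1 S X"]
      by linarith
  qed
  also have "\<dots> = (\<Sum>k<M. 2 * (mnorm1 S (K k))\<^sup>2) * mnorm1 S X" by (simp add: sum_distrib_right)
  finally show ?thesis .
qed

lemma mnorm1_funpow_le:
  assumes bound: "\<And>X. mnorm1 S (L X) \<le> C * mnorm1 S X" and C: "C \<ge> 0"
  shows "mnorm1 S ((L ^^ m) X) \<le> C ^ m * mnorm1 S X"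
proof (induction m)
  case 0 thus ?case by simp
next
  case (Suc m)
  have "mnorm1 S ((L ^^ Suc m) X) \<le> C * mnorm1 S ((L ^^ m) X)" using bound by simp
  also have "\<dots> \<le> C * (C ^ m * mnorm1 S X)" using Suc C by (rule mult_left_mono)
  finally show ?case by (simp add: mult.assoc)
qed

lemma summable_evol_series:
  assumes S: "finite S" and i: "i \<in> S" and j: "j \<in> S"
    and bound: "\<And>X. mnorm1 S (L X) \<le> C * mnorm1 S X" and C: "C \<ge> 0"
  shows "summable (\<lambda>m. complex_of_real (t ^ m / fact m) * (L ^^ m) X i j)"
proof (rule summable_comparison_test'[where N=0])
  show "summable (\<lambda>m. mnorm1 S X * (inverse (fact m) * (\<bar>t\<bar> * C) ^ m))"
    by (rule summable_mult) (rule summable_exp)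
next
  fix m :: nat
  have "norm (complex_of_real (t ^ m / fact m) * (L ^^ m) X i j)
      = \<bar>t\<bar> ^ m / fact m * cmod ((L ^^ m) X i j)"
    by (simp add: norm_mult norm_divide norm_power)
  also have "\<dots> \<le> \<bar>t\<bar> ^ m / fact m * (C ^ m * mnorm1 S X)"
    by (intro mult_left_mono order_trans[OF norm_entry_le_mnorm1[OF S i j] mnorm1_funpow_le[OF bound C]])
       simp
  also have "\<dots> = mnorm1 S X * (inverse (fact m) * (\<bar>t\<bar> * C) ^ m)"
    by (simp add: power_mult_distrib field_simps)
  finally show "norm (complex_of_real (t ^ m / fact m) * (L ^^ m) X i j)
      \<le> mnorm1 S X * (inverse (fact m) * (\<bar>t\<bar> * C) ^ m)" .
qed

definition perp_range :: "cfg set \<Rightarrow> vect \<Rightarrow> cmat \<Rightarrow> bool" where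
  "perp_range S w X \<longleftrightarrow> (\<forall>c\<in>S. (\<Sum>i\<in>S. cnj (w i) * X i c) = 0)"

lemma perp_range_mmul_eq_0:
  assumes "perp_range S w A"
  shows "(\<Sum>i\<in>S. cnj (w i) * mmul S A B i j) = 0"
proof -
  have "(\<Sum>i\<in>S. cnj (w i) * mmul S A B i j) = (\<Sum>c\<in>S. (\<Sum>i\<in>S. cnj (w i) * A i c) * B c j)"
    unfolding mmul_def by (simp add: sum_distrib_left sum_distrib_right mult.assoc) (rule sum.swap)
  thus ?thesis using assms unfolding perp_range_def by simp
qed

lemma perp_range_mmul: "perp_range S w A \<Longrightarrow> perp_range S w (mmul S A B)"
  using perp_range_mmul_eq_0 unfolding perp_range_def by blast

lemma perp_range_adj: "(\<forall>c\<in>S. mapply S K w c = 0) \<Longrightarrow> perp_range S w (adj K)"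
  unfolding perp_range_def adj_def mapply_def
  by (simp flip: cnj_sum complex_cnj_mult add: mult.commute)

lemma perp_range_lindblad0:
  assumes kill: "\<forall>k<M. \<forall>c\<in>S. mapply S (K k) w c = 0" and perp: "\<forall>k<M. perp_range S w (K k)"
    and X: "perp_range S w X"
  shows "perp_range S w (lindblad0 S M K X)"
  unfolding perp_range_def
proof
  fix j
  have "(\<Sum>i\<in>S. cnj (w i) * lindblad0 S M K X i j)
      = (\<Sum>k<M. (\<Sum>i\<in>S. cnj (w i) * mmul S (mmul S (K k) X) (adj (K k)) i j)
           - (1/2) * ((\<Sum>i\<in>S. cnj (w i) * mmul S (mmul S (adj (K k)) (K k)) X i j)
                    + (\<Sum>i\<in>S. cnj (w i) * mmul S X (mmul S (adj (K k)) (K k)) i j)))"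
    unfolding lindblad0_def
    by (simp add: sum_distrib_left right_diff_distrib distrib_left sum_subtractf sum.distrib
        mult.left_commute) (simp only: sum.swap[where A=S and B="{..<M}"])
  also have "\<dots> = 0"
  proof (rule sum.neutral, rule ballI)
    fix k assume "k \<in> {..<M}"
    hence "perp_range S w (mmul S (K k) X)" "perp_range S w (mmul S (adj (K k)) (K k))"
      using kill perp by (blast intro: perp_range_mmul perp_range_adj)+
    thus "(\<Sum>i\<in>S. cnj (w i) * mmul S (mmul S (K k) X) (adj (K k)) i j)
           - (1/2) * ((\<Sum>i\<in>S. cnj (w i) * mmul S (mmul S (adj (K k)) (K k)) X i j)
                    + (\<Sum>i\<in>S. cnj (w i) * mmul S X (mmul S (adj (K k)) (K k)) i j)) = 0"
      using X by (simp add: perp_range_mmul_eq_0)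
  qed
  finally show "(\<Sum>i\<in>S. cnj (w i) * lindblad0 S M K X i j) = 0" .
qed

lemma perp_range_evol:
  assumes S: "finite S" and bound: "\<And>X. mnorm1 S (L X) \<le> C * mnorm1 S X" and C: "C \<ge> 0"
    and invariant: "\<And>X. perp_range S w X \<Longrightarrow> perp_range S w (L X)" and X: "perp_range S w X"
  shows "perp_range S w (evol L t X)"
  unfolding perp_range_def
proof
  fix c assume c: "c \<in> S"
  have powers: "perp_range S w ((L ^^ m) X)" for m by (induction m) (simp_all add: X invariant)
  note summable = summable_evol_series[OF S _ c bound C]
  have "(\<Sum>i\<in>S. cnj (w i) * evol L t X i c)
      = (\<Sum>i\<in>S. \<Sum>m. cnj (w i) * (complex_of_real (t ^ m / fact m) * (L ^^ m) X i c))"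
    unfolding evol_def by (intro sum.cong refl suminf_mult[symmetric] summable)
  also have "\<dots> = (\<Sum>m. \<Sum>i\<in>S. cnj (w i) * (complex_of_real (t ^ m / fact m) * (L ^^ m) X i c))"
    by (rule suminf_sum[symmetric]) (intro summable_mult summable)
  also have "\<dots> = (\<Sum>m. complex_of_real (t ^ m / fact m) * (\<Sum>i\<in>S. cnj (w i) * (L ^^ m) X i c))"
    by (simp add: sum_distrib_left mult.left_commute)
  also have "\<dots> = 0" using powers c unfolding perp_range_def by simp
  finally show "(\<Sum>i\<in>S. cnj (w i) * evol L t X i c) = 0" .
qed

section \<open>The local dissipators\<close>

text \<open>Decompose u = b + t + r along H^w \<oplus> H^t \<oplus> H^r: then D u = D r \<in> H^t \<oplus> H^r,
  which is orthogonal to H^w \<subseteq> H^\<circ>.\<close>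
lemma orth_range_of_layered_dissipator:
  assumes S: "finite S" and T: "finite T" "T \<subseteq> S"
    and Hc: "csubspace Hc" "Hc \<subseteq> vecs T" and Hw: "csubspace Hw" "Hw \<subseteq> Hc"
    and D: "supported_on T D"
    and annih: "\<forall>v \<in> osum Hw (ominus S Hc Hw). mapply T D v = (\<lambda>_. 0)"
    and maps: "\<forall>v \<in> ominus S (vecs T) Hc.
                 mapply T D v \<in> osum (ominus S Hc Hw) (ominus S (vecs T) Hc)"
    and h: "h \<in> Hw" and u: "u \<in> vecs T"
  shows "inner_on T h (mapply T D u) = 0"
proof -
  have Hw_vecs: "Hw \<subseteq> vecs T" using Hw(2) Hc(2) by blast
  obtain a where aHc: "a \<in> Hc" and a_orth: "\<forall>w\<in>Hc. inner_on T w (\<lambda>i. u i - a i) = 0"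
    using orth_decomposition[OF T(1) Hc] by blast
  obtain b where bHw: "b \<in> Hw" and b_orth: "\<forall>w\<in>Hw. inner_on T w (\<lambda>i. a i - b i) = 0"
    using orth_decomposition[OF T(1) Hw(1) Hw_vecs] by blast
  define r where "r = (\<lambda>i. u i - a i)"
  define t where "t = (\<lambda>i. a i - b i)"
  have r_vecs: "r \<in> vecs T" and t_vecs: "t \<in> vecs T"
    unfolding r_def t_def using u aHc bHw Hc(2) Hw_vecs by (auto intro: vecs_diff)
  have r: "r \<in> ominus S (vecs T) Hc"
    unfolding ominus_def using r_vecs a_orth inner_on_superset[OF S T(2) r_vecs] r_def by auto
  have "t \<in> Hc" unfolding t_def using csubspace_diff[OF Hc(1) aHc] bHw Hw(2) by blast
  hence t: "t \<in> ominus S Hc Hw"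
    unfolding ominus_def using b_orth inner_on_superset[OF S T(2) t_vecs] t_def by auto
  have "(\<lambda>i. b i + t i) \<in> osum Hw (ominus S Hc Hw)"
    unfolding osum_def using bHw t by blast
  hence Da: "mapply T D a = (\<lambda>_. 0)" using annih unfolding t_def by simp
  have "mapply T D u = mapply T D r"
    using mapply_add[of T D a r] Da unfolding r_def by simp
  then obtain t' r' where t': "t' \<in> ominus S Hc Hw" and r': "r' \<in> ominus S (vecs T) Hc"
      and Du: "mapply T D u = (\<lambda>i. t' i + r' i)"
    using maps r unfolding osum_def by auto
  have "inner_on S h t' = 0" using t' h unfolding ominus_def by blast
  moreover have "inner_on S h r' = 0" using r' h Hw(2) unfolding ominus_def by blast
  ultimately have "inner_on S h (mapply T D u) = 0" using Du by (simp add: inner_on_add_right)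
  moreover have "mapply T D u \<in> vecs T"
    using D unfolding supported_on_def vecs_def mapply_def by auto
  ultimately show ?thesis using inner_on_superset[OF S T(2)] by simp
qed

lemma kron_id_apply_eq_0_if_slice:
  assumes c: "c \<in> configs n d" and slice: "slice n d N w (restr (- N) c) \<in> H"
    and kill: "\<forall>h\<in>H. mapply (sub_configs n d N) D h = (\<lambda>_. 0)"
  shows "mapply (configs n d) (kron_id n d N D) w c = 0"
proof -
  have "mapply (configs n d) (kron_id n d N D) w c
      = (\<Sum>x'\<in>sub_configs n d N. D (restr N c) x' * w (merge N x' (restr (- N) c)))"
    by (rule kron_id_apply[OF c])
  also have "\<dots> = mapply (sub_configs n d N) D (slice n d N w (restr (- N) c)) (restr N c)"
    unfolding mapply_def slice_def by (intro sum.cong refl) auto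
  finally show ?thesis using kill slice by simp
qed

lemma perp_range_kron_id_if_slices:
  assumes slices: "\<And>y. y \<in> sub_configs n d (- N) \<Longrightarrow> slice n d N w y \<in> H"
    and orth: "\<forall>h\<in>H. \<forall>u\<in>vecs (sub_configs n d N).
                 inner_on (sub_configs n d N) h (mapply (sub_configs n d N) D u) = 0"
  shows "perp_range (configs n d) w (kron_id n d N D)"
  unfolding perp_range_def
proof
  fix c' assume c': "c' \<in> configs n d"
  let ?X = "sub_configs n d N" and ?y = "restr (- N) c'" and ?x = "restr N c'"
  have x: "?x \<in> ?X" by (rule restr_in_sub_configs[OF c'])
  have "(\<Sum>c\<in>configs n d. cnj (w c) * kron_id n d N D c c')
      = (\<Sum>c\<in>configs n d. if restr (- N) c = ?y then cnj (w c) * D (restr N c) ?x else 0)"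
    unfolding kron_id_def using c' by (intro sum.cong refl) auto
  also have "\<dots> = (\<Sum>x\<in>?X. cnj (w (merge N x ?y)) * D x ?x)"
    by (subst sum_configs_fiber[OF restr_in_sub_configs[OF c']]) (simp add: restr_merge_left)
  also have "\<dots> = inner_on ?X (slice n d N w ?y) (mapply ?X D (basis_vec ?x))"
    unfolding inner_on_def slice_def mapply_basis_vec[OF finite_sub_configs x]
    by (intro sum.cong refl) auto
  also have "\<dots> = 0"
    using orth slices[OF restr_in_sub_configs[OF c']] basis_vec_in_vecs[OF x] by blast
  finally show "(\<Sum>c\<in>configs n d. cnj (w c) * kron_id n d N D c c') = 0" .
qed

section \<open>States close to the invariant states\<close>

lemma norm_le_if_sum_squares_le:
  assumes "finite T" "i \<in> T" "(\<Sum>c\<in>T. (cmod (f c))\<^sup>2) \<le> e\<^sup>2" "e \<ge> 0"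
  shows "cmod (f i) \<le> e"
proof -
  have "(cmod (f i))\<^sup>2 \<le> (\<Sum>c\<in>T. (cmod (f c))\<^sup>2)" using assms(1,2) by (intro member_le_sum) auto
  hence "(cmod (f i))\<^sup>2 \<le> e\<^sup>2" using assms(3) by linarith
  thus ?thesis using assms(4) by (simp add: power2_le_iff_abs_le)
qed

lemma column_sum_squares_le_mnorm:
  assumes S: "finite S" and E: "mnorm S E < \<epsilon>" and b: "b \<in> S"
  shows "(\<Sum>a\<in>S. (cmod (E a b))\<^sup>2) \<le> \<epsilon>\<^sup>2"
proof -
  define X where "X = (\<Sum>a\<in>S. \<Sum>b\<in>S. (cmod (E a b))\<^sup>2)"
  have X: "X \<ge> 0" unfolding X_def by (intro sum_nonneg) auto
  have "(\<Sum>a\<in>S. (cmod (E a b))\<^sup>2) \<le> X"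
    unfolding X_def using S b by (intro sum_mono member_le_sum) auto
  also have "X = (sqrt X)\<^sup>2" using X by simp
  also have "\<dots> \<le> \<epsilon>\<^sup>2"
    using E X unfolding mnorm_def X_def[symmetric] by (intro power_mono) simp_all
  finally show ?thesis .
qed

lemma norm_le_one_if_unit:
  assumes S: "finite S" and \<Psi>: "inner_on S \<Psi> \<Psi> = 1" and a: "a \<in> S"
  shows "cmod (\<Psi> a) \<le> 1"
proof -
  have "(\<Sum>c\<in>S. (cmod (\<Psi> c))\<^sup>2) = 1" using \<Psi> by (simp only: inner_on_self of_real_eq_1_iff)
  thus ?thesis using norm_le_if_sum_squares_le[OF S a, of \<Psi> 1] by simp
qed

text \<open>If w is orthogonal to \<Psi> and to \<alpha>\<Psi> + w + e, then |w|^2 = -\<langle>w, e\<rangle> \<le> |w|^2/2 + |e|^2/2.\<close>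
lemma sum_squares_le_if_orth:
  assumes orth: "inner_on S w (\<lambda>a. \<alpha> * \<Psi> a + w a + e a) = 0" and w\<Psi>: "inner_on S w \<Psi> = 0"
  shows "(\<Sum>c\<in>S. (cmod (w c))\<^sup>2) \<le> (\<Sum>c\<in>S. (cmod (e c))\<^sup>2)"
proof -
  have "\<alpha> * inner_on S w \<Psi> + inner_on S w w + inner_on S w e = 0"
    using orth by (simp add: inner_on_add_right inner_on_scale_right add.assoc)
  hence "inner_on S w w = - inner_on S w e"
    using w\<Psi> by (simp add: eq_neg_iff_add_eq_0 add.commute)
  have "(\<Sum>c\<in>S. (cmod (w c))\<^sup>2) = cmod (inner_on S w w)"
    by (simp only: inner_on_self norm_of_real) (simp add: sum_nonneg)
  also have "\<dots> = cmod (inner_on S w e)" using \<open>inner_on S w w = - inner_on S w e\<close> by simp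
  also have "\<dots> \<le> (\<Sum>c\<in>S. (cmod (w c))\<^sup>2) / 2 + (\<Sum>c\<in>S. (cmod (e c))\<^sup>2) / 2"
    by (rule norm_inner_on_le)
  finally show ?thesis by linarith
qed

text \<open>Hermiticity of \<sigma> = \<Psi> \<alpha>^T + W, with the columns of W orthogonal to \<Psi>, forces the
  row vector \<alpha> to be a multiple of cnj \<Psi> up to a term controlled by W.\<close>
lemma hermitian_column_coefficient:
  assumes S: "finite S" and \<Psi>: "inner_on S \<Psi> \<Psi> = 1"
    and herm: "\<And>a b. a \<in> S \<Longrightarrow> b \<in> S \<Longrightarrow> \<sigma> a b = cnj (\<sigma> b a)"
    and \<sigma>: "\<And>a b. \<sigma> a b = \<alpha> b * \<Psi> a + w b a" and w\<Psi>: "\<And>b. inner_on S \<Psi> (w b) = 0"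
    and b: "b \<in> S"
  shows "\<alpha> b = cnj (\<Sum>a\<in>S. \<alpha> a * \<Psi> a) * cnj (\<Psi> b) + (\<Sum>a\<in>S. cnj (\<Psi> a) * cnj (w a b))"
proof -
  have "(\<Sum>a\<in>S. cnj (\<Psi> a) * \<sigma> a b) = \<alpha> b * inner_on S \<Psi> \<Psi> + inner_on S \<Psi> (w b)"
    unfolding \<sigma> inner_on_def by (simp add: distrib_left sum.distrib sum_distrib_left mult.left_commute)
  hence "\<alpha> b = (\<Sum>a\<in>S. cnj (\<Psi> a) * \<sigma> a b)" using \<Psi> w\<Psi> by simp
  also have "\<dots> = (\<Sum>a\<in>S. cnj (\<Psi> b) * (cnj (\<alpha> a) * cnj (\<Psi> a)) + cnj (\<Psi> a) * cnj (w a b))"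
  proof (intro sum.cong refl)
    fix a assume "a \<in> S"
    hence "\<sigma> a b = cnj (\<alpha> a) * cnj (\<Psi> b) + cnj (w a b)" using herm b \<sigma> by simp
    thus "cnj (\<Psi> a) * \<sigma> a b = cnj (\<Psi> b) * (cnj (\<alpha> a) * cnj (\<Psi> a)) + cnj (\<Psi> a) * cnj (w a b)"
      by (simp add: algebra_simps)
  qed
  also have "\<dots> = cnj (\<Psi> b) * (\<Sum>a\<in>S. cnj (\<alpha> a) * cnj (\<Psi> a)) + (\<Sum>a\<in>S. cnj (\<Psi> a) * cnj (w a b))"
    by (simp only: sum.distrib sum_distrib_left)
  finally show ?thesis by (simp add: mult.commute)
qed

lemma norm_sum_le_card_mult:
  assumes "\<And>a. a \<in> S \<Longrightarrow> cmod (f a) \<le> \<epsilon>"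
  shows "cmod (\<Sum>a\<in>S. f a) \<le> real (card S) * \<epsilon>"
proof -
  have "cmod (\<Sum>a\<in>S. f a) \<le> (\<Sum>a\<in>S. cmod (f a))" by (rule norm_sum)
  also have "\<dots> \<le> (\<Sum>a\<in>S. \<epsilon>)" by (rule sum_mono) (rule assms)
  finally show ?thesis by simp
qed

text \<open>Hermiticity and the trace condition pin the coefficients \<alpha>_b down to cnj (\<Psi> b)
  up to O(\<epsilon>).\<close>
lemma near_target_if_small_orth_part:
  assumes S: "finite S" and \<Psi>: "inner_on S \<Psi> \<Psi> = 1"
    and herm: "\<And>a b. a \<in> S \<Longrightarrow> b \<in> S \<Longrightarrow> \<sigma> a b = cnj (\<sigma> b a)" and tr: "(\<Sum>c\<in>S. \<sigma> c c) = 1"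
    and \<sigma>: "\<And>a b. \<sigma> a b = \<alpha> b * \<Psi> a + w b a" and \<Psi>_w: "\<And>b. inner_on S \<Psi> (w b) = 0"
    and w_small: "\<And>a b. a \<in> S \<Longrightarrow> b \<in> S \<Longrightarrow> cmod (w b a) \<le> \<epsilon>"
    and i: "i \<in> S" and j: "j \<in> S"
  shows "cmod (\<sigma> i j - \<Psi> i * cnj (\<Psi> j)) \<le> (2 * real (card S) + 1) * \<epsilon>"
proof -
  have \<Psi>_le: "cmod (\<Psi> a) \<le> 1" if "a \<in> S" for a by (rule norm_le_one_if_unit[OF S \<Psi> that])
  have \<epsilon>: "\<epsilon> \<ge> 0" using w_small[OF i i] norm_ge_zero[of "w i i"] by linarith
  define \<kappa> where "\<kappa> = cnj (\<Sum>a\<in>S. \<alpha> a * \<Psi> a)"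
  define \<eta> where "\<eta> b = (\<Sum>a\<in>S. cnj (\<Psi> a) * cnj (w a b))" for b
  have \<alpha>_eq: "\<alpha> j = \<kappa> * cnj (\<Psi> j) + \<eta> j"
    unfolding \<kappa>_def \<eta>_def by (rule hermitian_column_coefficient[OF S \<Psi> herm \<sigma> \<Psi>_w j])
  have \<eta>_le: "cmod (\<eta> j) \<le> real (card S) * \<epsilon>"
    unfolding \<eta>_def
  proof (rule norm_sum_le_card_mult)
    fix a assume a: "a \<in> S"
    have "cmod (\<Psi> a) * cmod (w a j) \<le> 1 * \<epsilon>"
      using \<Psi>_le[OF a] w_small[OF j a] by (intro mult_mono) auto
    thus "cmod (cnj (\<Psi> a) * cnj (w a j)) \<le> \<epsilon>" by (simp add: norm_mult)
  qed
  have "\<kappa> - 1 = cnj ((\<Sum>c\<in>S. \<alpha> c * \<Psi> c) - (\<Sum>c\<in>S. \<sigma> c c))" unfolding \<kappa>_def tr by simp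
  also have "\<dots> = - cnj (\<Sum>c\<in>S. w c c)" by (simp add: \<sigma> sum.distrib)
  finally have \<kappa>_le: "cmod (\<kappa> - 1) \<le> real (card S) * \<epsilon>"
    using norm_sum_le_card_mult[of S "\<lambda>c. w c c" \<epsilon>] w_small
    by (simp only: norm_minus_cancel complex_mod_cnj)
  have "\<sigma> i j - \<Psi> i * cnj (\<Psi> j) = (\<kappa> - 1) * (cnj (\<Psi> j) * \<Psi> i) + \<eta> j * \<Psi> i + w j i"
    using \<alpha>_eq \<sigma>[of i j] by (simp add: algebra_simps)
  hence "cmod (\<sigma> i j - \<Psi> i * cnj (\<Psi> j))
      = cmod ((\<kappa> - 1) * (cnj (\<Psi> j) * \<Psi> i) + \<eta> j * \<Psi> i + w j i)" by simp
  also have "\<dots> \<le> cmod (\<kappa> - 1) * (cmod (\<Psi> j) * cmod (\<Psi> i)) + cmod (\<eta> j) * cmod (\<Psi> i) + cmod (w j i)"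
    using norm_triangle_ineq[of "(\<kappa> - 1) * (cnj (\<Psi> j) * \<Psi> i) + \<eta> j * \<Psi> i" "w j i"]
      norm_triangle_ineq[of "(\<kappa> - 1) * (cnj (\<Psi> j) * \<Psi> i)" "\<eta> j * \<Psi> i"]
    by (simp add: norm_mult)
  also have "\<dots> \<le> real (card S) * \<epsilon> * (1 * 1) + real (card S) * \<epsilon> * 1 + \<epsilon>"
    using \<kappa>_le \<eta>_le \<Psi>_le[OF i] \<Psi>_le[OF j] w_small[OF i j]
    by (intro add_mono mult_mono) (simp_all add: \<epsilon>)
  finally show ?thesis by (simp add: algebra_simps)
qed

text \<open>Write each column of \<sigma> as \<alpha>_b \<Psi> + w_b with w_b \<perp> \<Psi>. Since w_b \<in> H_0 \<ominus> H_d is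
  orthogonal to the range of \<rho>, it is bounded by the b-th column of \<rho> - \<sigma>.\<close>
lemma entry_near_target_if_near_dens:
  assumes S: "finite S" and \<Psi>: "inner_on S \<Psi> \<Psi> = 1" "\<Psi> \<in> K0"
    and K0: "csubspace K0"
    and \<sigma>: "psd_on S \<sigma>" "(\<Sum>c\<in>S. \<sigma> c c) = 1" "supp S \<sigma> \<subseteq> K0"
    and \<rho>: "\<forall>w\<in>ominus S K0 (H_d \<Psi>). perp_range S w \<rho>"
    and near: "mnorm S (\<lambda>i j. \<rho> i j - \<sigma> i j) < \<epsilon>"
    and i: "i \<in> S" and j: "j \<in> S"
  shows "cmod (\<rho> i j - \<Psi> i * cnj (\<Psi> j)) \<le> (2 * real (card S) + 2) * \<epsilon>"
proof -
  define E where "E i j = \<rho> i j - \<sigma> i j" for i j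
  define \<alpha> where "\<alpha> b = inner_on S \<Psi> (\<lambda>a. \<sigma> a b)" for b
  define w where "w b = (\<lambda>a. \<sigma> a b - \<alpha> b * \<Psi> a)" for b
  have \<sigma>_eq: "\<sigma> a b = \<alpha> b * \<Psi> a + w b a" for a b unfolding w_def by simp
  have "mnorm S (\<lambda>i j. \<rho> i j - \<sigma> i j) \<ge> 0" unfolding mnorm_def by (simp add: sum_nonneg)
  hence \<epsilon>: "\<epsilon> \<ge> 0" using near by linarith
  have col_E: "(\<Sum>a\<in>S. (cmod (E a b))\<^sup>2) \<le> \<epsilon>\<^sup>2" if "b \<in> S" for b
    using column_sum_squares_le_mnorm[OF S _ that] near unfolding E_def by blast
  have \<Psi>_w: "inner_on S \<Psi> (w b) = 0" for b
    unfolding w_def by (simp add: inner_on_diff_right inner_on_scale_right \<Psi>(1) \<alpha>_def)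
  have w_small: "cmod (w b a) \<le> \<epsilon>" if a: "a \<in> S" and b: "b \<in> S" for a b
  proof -
    have "(\<lambda>a. \<sigma> a b) \<in> K0"
      using mapply_in_supp[OF basis_vec_in_vecs[OF b]] \<sigma>(3) mapply_basis_vec[OF S b] by auto
    moreover have "(\<lambda>a. \<alpha> b * \<Psi> a) \<in> K0" using K0 \<Psi>(2) unfolding csubspace_def by blast
    ultimately have "w b \<in> K0" unfolding w_def by (rule csubspace_diff[OF K0])
    hence "w b \<in> ominus S K0 (H_d \<Psi>)" unfolding ominus_def H_d_def by (auto simp: inner_on_scale_left \<Psi>_w)
    hence "inner_on S (w b) (\<lambda>a. \<alpha> b * \<Psi> a + w b a + E a b) = 0"
      using \<rho> b unfolding perp_range_def inner_on_def E_def \<sigma>_eq by simp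
    moreover have "inner_on S (w b) \<Psi> = 0" using \<Psi>_w[of b] inner_on_commute[of S "w b" \<Psi>] by simp
    ultimately have "(\<Sum>c\<in>S. (cmod (w b c))\<^sup>2) \<le> (\<Sum>c\<in>S. (cmod (E c b))\<^sup>2)"
      by (rule sum_squares_le_if_orth)
    also have "\<dots> \<le> \<epsilon>\<^sup>2" by (rule col_E[OF b])
    finally show ?thesis by (rule norm_le_if_sum_squares_le[OF S a _ \<epsilon>])
  qed
  have "cmod (\<sigma> i j - \<Psi> i * cnj (\<Psi> j)) \<le> (2 * real (card S) + 1) * \<epsilon>"
    by (rule near_target_if_small_orth_part[OF S \<Psi>(1) psd_on_hermitian[OF S \<sigma>(1)] \<sigma>(2) \<sigma>_eq
          \<Psi>_w w_small i j])
  moreover have "cmod (E i j) \<le> \<epsilon>" by (rule norm_le_if_sum_squares_le[OF S i col_E[OF j] \<epsilon>])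
  moreover have "\<rho> i j - \<Psi> i * cnj (\<Psi> j) = E i j + (\<sigma> i j - \<Psi> i * cnj (\<Psi> j))"
    unfolding E_def by simp
  ultimately show ?thesis using norm_triangle_ineq[of "E i j" "\<sigma> i j - \<Psi> i * cnj (\<Psi> j)"]
    by (simp add: algebra_simps)
qed

lemma tendsto_target_if_dist_dens_tendsto_0:
  assumes \<Psi>: "inner_on (configs n d) \<Psi> \<Psi> = 1" "\<Psi> \<in> K0" and K0: "csubspace K0"
    and nonempty: "dens n d K0 \<noteq> {}"
    and perp: "\<And>t. \<forall>w\<in>ominus (configs n d) K0 (H_d \<Psi>). perp_range (configs n d) w (\<rho> t)"
    and lim: "((\<lambda>t. INF \<sigma>\<in>dens n d K0. mnorm (configs n d) (\<lambda>i j. \<rho> t i j - \<sigma> i j)) \<longlongrightarrow> 0) at_top"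
    and i: "i \<in> configs n d" and j: "j \<in> configs n d"
  shows "((\<lambda>t. \<rho> t i j) \<longlongrightarrow> \<Psi> i * cnj (\<Psi> j)) at_top"
  unfolding tendsto_iff
proof (intro allI impI)
  let ?S = "configs n d"
  fix e :: real assume e: "e > 0"
  define \<epsilon> where "\<epsilon> = e / (2 * real (card ?S) + 3)"
  have "\<epsilon> > 0" unfolding \<epsilon>_def using e by simp
  with lim have "\<forall>\<^sub>F t in at_top. (INF \<sigma>\<in>dens n d K0. mnorm ?S (\<lambda>i j. \<rho> t i j - \<sigma> i j)) < \<epsilon>"
    by (rule order_tendstoD(2))
  thus "\<forall>\<^sub>F t in at_top. dist (\<rho> t i j) (\<Psi> i * cnj (\<Psi> j)) < e"
  proof (rule eventually_mono)
    fix t assume t: "(INF \<sigma>\<in>dens n d K0. mnorm ?S (\<lambda>i j. \<rho> t i j - \<sigma> i j)) < \<epsilon>"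
    have "(\<lambda>\<sigma>. mnorm ?S (\<lambda>i j. \<rho> t i j - \<sigma> i j)) ` dens n d K0 \<noteq> {}" using nonempty by blast
    from cInf_lessD[OF this t] obtain \<sigma> where "\<sigma> \<in> dens n d K0"
      and near: "mnorm ?S (\<lambda>i j. \<rho> t i j - \<sigma> i j) < \<epsilon>"
      by blast
    hence \<sigma>: "psd_on ?S \<sigma>" "(\<Sum>c\<in>?S. \<sigma> c c) = 1" "supp ?S \<sigma> \<subseteq> K0"
      unfolding dens_def by auto
    have "cmod (\<rho> t i j - \<Psi> i * cnj (\<Psi> j)) \<le> (2 * real (card ?S) + 2) * \<epsilon>"
      by (rule entry_near_target_if_near_dens[OF finite_configs \<Psi> K0 \<sigma> perp near i j])
    also have "\<dots> < e" unfolding \<epsilon>_def using e by (simp add: field_simps)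
    finally show "dist (\<rho> t i j) (\<Psi> i * cnj (\<Psi> j)) < e" by (simp add: dist_norm)
  qed
qed

section \<open>The spaces attached to the target state\<close>

lemma csubspace_H_0: "csubspace (H_0 n d \<Psi> M N)"
  unfolding H_0_def by (rule csubspace_Inter_vecs, rule csubspace_supp)

lemma H_0_subset_vecs: "H_0 n d \<Psi> M N \<subseteq> vecs (configs n d)"
  unfolding H_0_def by blast

lemma target_in_H_0: "\<Psi> \<in> vecs (configs n d) \<Longrightarrow> \<Psi> \<in> H_0 n d \<Psi> M N"
  unfolding H_0_def rho_N_def using in_supp_kron_ptrace_rho_d by blast

lemma csubspace_H_w: "csubspace (H_w n d \<Psi> M N)"
  unfolding H_w_def by (rule csubspace_ominus[OF csubspace_H_0])

lemma H_w_subset_vecs: "H_w n d \<Psi> M N \<subseteq> vecs (configs n d)"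
  unfolding H_w_def ominus_def using H_0_subset_vecs by blast

lemma H_w_slice_in_H_wloc:
  assumes "w \<in> H_w n d \<Psi> M N" "y \<in> sub_configs n d (- N')"
  shows "slice n d N' w y \<in> H_wloc n d \<Psi> M N N'"
  unfolding H_wloc_def
  by (rule slice_in_supp_ptrace_proj[OF H_w_subset_vecs
        proj_is_orth_proj[OF finite_configs csubspace_H_w H_w_subset_vecs] assms])

lemma csubspace_H_circ: "csubspace (H_circ n d \<Psi> N')"
  unfolding H_circ_def by (rule csubspace_supp)

lemma H_circ_subset_vecs: "H_circ n d \<Psi> N' \<subseteq> vecs (sub_configs n d N')"
  unfolding H_circ_def rho_N_def by (rule supp_subset_vecs) (simp add: ptrace_def)

lemma csubspace_H_wloc: "csubspace (H_wloc n d \<Psi> M N N')"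
  unfolding H_wloc_def by (rule csubspace_supp)

lemma H_w_subset_tensor_H_wloc:
  "w \<in> H_w n d \<Psi> M N \<Longrightarrow> w \<in> tensor_full n d N' (H_wloc n d \<Psi> M N N')"
  using H_w_subset_vecs H_w_slice_in_H_wloc by (blast intro: in_tensor_full_if_slices)

lemma rho_d_in_dens_H_0:
  assumes \<Psi>: "\<Psi> \<in> vecs (configs n d)" "inner_on (configs n d) \<Psi> \<Psi> = 1"
  shows "rho_d \<Psi> \<in> dens n d (H_0 n d \<Psi> M N)"
proof -
  let ?S = "configs n d"
  have apply_eq: "mapply ?S (rho_d \<Psi>) v = (\<lambda>a. inner_on ?S \<Psi> v * \<Psi> a)" for v
    unfolding mapply_def rho_d_def inner_on_def
    by (simp add: sum_distrib_left mult.assoc mult.commute mult.left_commute)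
  have "inner_on ?S v (mapply ?S (rho_d \<Psi>) v) = complex_of_real ((cmod (inner_on ?S \<Psi> v))\<^sup>2)" for v
    unfolding apply_eq inner_on_scale_right inner_on_commute[of ?S v \<Psi>]
    by (simp only: mult.commute[of "inner_on ?S \<Psi> v"] cnj_mult_self)
  hence "psd_on ?S (rho_d \<Psi>)" unfolding psd_on_def by simp
  moreover have "supp ?S (rho_d \<Psi>) \<subseteq> H_0 n d \<Psi> M N"
  proof
    fix x assume "x \<in> supp ?S (rho_d \<Psi>)"
    then obtain v where "x = (\<lambda>a. inner_on ?S \<Psi> v * \<Psi> a)" unfolding supp_def apply_eq by blast
    thus "x \<in> H_0 n d \<Psi> M N"
      using csubspace_H_0 target_in_H_0[OF \<Psi>(1)] unfolding csubspace_def by blast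
  qed
  moreover have "supported_on ?S (rho_d \<Psi>)"
    using \<Psi>(1) unfolding supported_on_def rho_d_def vecs_def by auto
  moreover have "(\<Sum>c\<in>?S. rho_d \<Psi> c c) = 1"
    using \<Psi>(2) unfolding rho_d_def inner_on_def by (simp add: mult.commute)
  ultimately show ?thesis unfolding dens_def by blast
qed

lemma perp_range_if_supp_orth:
  assumes "finite S" "supp S \<rho> \<subseteq> ominus S V W" "w \<in> W"
  shows "perp_range S w \<rho>"
  unfolding perp_range_def
proof
  fix c assume c: "c \<in> S"
  have "mapply S \<rho> (basis_vec c) \<in> ominus S V W"
    using assms(2) mapply_in_supp[OF basis_vec_in_vecs[OF c]] by blast
  hence "inner_on S w (mapply S \<rho> (basis_vec c)) = 0" using assms(3) unfolding ominus_def by blast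
  thus "(\<Sum>i\<in>S. cnj (w i) * \<rho> i c) = 0"
    unfolding mapply_basis_vec[OF assms(1) c] inner_on_def .
qed

lemma mapply_eq_0_if_annihilates_osum:
  assumes "(\<lambda>_. 0) \<in> H'" "\<forall>v \<in> osum H H'. mapply T D v = (\<lambda>_. 0)" "h \<in> H"
  shows "mapply T D h = (\<lambda>_. 0)"
proof -
  have "(\<lambda>i. h i + 0) \<in> osum H H'"
    unfolding osum_def by (rule CollectI, rule exI[of _ h], rule exI[of _ "\<lambda>_. 0"]) (simp add: assms)
  thus ?thesis using assms(2) by simp
qed

text \<open>The local conditions on D_N make H_w invariant in the strong sense w* L(X) = 0 whenever
  w* X = 0: every slice of w \<in> H_w lies in H^w_N, which D_N kills and which is orthogonal to
  the range of D_N.\<close>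
lemma perp_range_H_w_lindblad0:
  assumes incl: "\<forall>k<M. H_wloc n d \<Psi> M N (N k) \<subseteq> H_circ n d \<Psi> (N k)"
    and D_local: "\<forall>k<M. supported_on (sub_configs n d (N k)) (Dloc k)"
    and D_annih: "\<forall>k<M. \<forall>v \<in> osum (H_wloc n d \<Psi> M N (N k)) (H_t n d \<Psi> M N (N k)).
                     mapply (sub_configs n d (N k)) (Dloc k) v = (\<lambda>_. 0)"
    and D_maps: "\<forall>k<M. \<forall>v \<in> H_r n d \<Psi> (N k).
                     mapply (sub_configs n d (N k)) (Dloc k) v
                       \<in> osum (H_t n d \<Psi> M N (N k)) (H_r n d \<Psi> (N k))"
    and w: "w \<in> H_w n d \<Psi> M N" and X: "perp_range (configs n d) w X"
  shows "perp_range (configs n d) w (lindblad0 (configs n d) M (\<lambda>k. kron_id n d (N k) (Dloc k)) X)"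
proof (rule perp_range_lindblad0[OF _ _ X]; intro allI impI ballI)
  fix k assume k: "k < M"
  let ?T = "sub_configs n d (N k)" and ?Hw = "H_wloc n d \<Psi> M N (N k)"
  have annih: "\<forall>v \<in> osum ?Hw (H_t n d \<Psi> M N (N k)). mapply ?T (Dloc k) v = (\<lambda>_. 0)"
    using D_annih k by blast
  have "(\<lambda>_. 0) \<in> H_t n d \<Psi> M N (N k)"
    using csubspace_H_circ unfolding H_t_def ominus_def csubspace_def by simp
  note kill = mapply_eq_0_if_annihilates_osum[OF this annih]
  show "mapply (configs n d) (kron_id n d (N k) (Dloc k)) w c = 0" if c: "c \<in> configs n d" for c
    using kill H_w_slice_in_H_wloc[OF w restr_in_sub_configs[OF c]]
    by (intro kron_id_apply_eq_0_if_slice[OF c]) auto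
  have "\<forall>h\<in>?Hw. \<forall>u\<in>vecs ?T. inner_on ?T h (mapply ?T (Dloc k) u) = 0"
  proof (intro ballI)
    fix h u assume "h \<in> ?Hw" "u \<in> vecs ?T"
    moreover have "?Hw \<subseteq> H_circ n d \<Psi> (N k)" using incl k by blast
    moreover have "supported_on ?T (Dloc k)" using D_local k by blast
    moreover have "\<forall>v \<in> H_r n d \<Psi> (N k). mapply ?T (Dloc k) v
                     \<in> osum (H_t n d \<Psi> M N (N k)) (H_r n d \<Psi> (N k))"
      using D_maps k by blast
    ultimately show "inner_on ?T h (mapply ?T (Dloc k) u) = 0"
      using annih unfolding H_t_def H_r_def
      by (intro orth_range_of_layered_dissipator[OF finite_configs finite_sub_configs
            sub_configs_subset_configs csubspace_H_circ H_circ_subset_vecs csubspace_H_wloc]) auto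
  qed
  thus "perp_range (configs n d) w (kron_id n d (N k) (Dloc k))"
    using H_w_slice_in_H_wloc[OF w] by (intro perp_range_kron_id_if_slices)
qed

theorem corollary6:
  fixes n :: nat and d :: "nat \<Rightarrow> nat" and \<Psi> :: vect
    and M :: nat and N :: "nat \<Rightarrow> nat set" and Dloc :: "nat \<Rightarrow> cmat"
  assumes Psi_vec: "\<Psi> \<in> vecs (configs n d)"
    and Psi_unit: "inner_on (configs n d) \<Psi> \<Psi> = 1"
    and N_sites: "\<forall>k<M. N k \<subseteq> {..<n}"
    and strict: "\<forall>k<M. H_wloc n d \<Psi> M N (N k) \<subset> H_circ n d \<Psi> (N k)"
    and D_local: "\<forall>k<M. supported_on (sub_configs n d (N k)) (Dloc k)"
    and D_annih: "\<forall>k<M. \<forall>v \<in> osum (H_wloc n d \<Psi> M N (N k)) (H_t n d \<Psi> M N (N k)).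
                     mapply (sub_configs n d (N k)) (Dloc k) v = (\<lambda>_. 0)"
    and D_maps: "\<forall>k<M. \<forall>v \<in> H_r n d \<Psi> (N k).
                     mapply (sub_configs n d (N k)) (Dloc k) v
                       \<in> osum (H_t n d \<Psi> M N (N k)) (H_r n d \<Psi> (N k))"
    and gas: "GAS n d (lindblad0 (configs n d) M (\<lambda>k. kron_id n d (N k) (Dloc k)))
                (dens n d (H_0 n d \<Psi> M N))"
  shows "\<forall>\<rho>0 \<in> dens n d (ominus (configs n d) (vecs (configs n d))
                   {v. \<forall>k<M. v \<in> tensor_full n d (N k) (H_wloc n d \<Psi> M N (N k))}).
           \<forall>i\<in>configs n d. \<forall>j\<in>configs n d.
             ((\<lambda>t. evol (lindblad0 (configs n d) M (\<lambda>k. kron_id n d (N k) (Dloc k))) t \<rho>0 i j)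
                \<longlongrightarrow> rho_d \<Psi> i j) at_top"
proof (intro ballI)
  let ?S = "configs n d" and ?L = "lindblad0 (configs n d) M (\<lambda>k. kron_id n d (N k) (Dloc k))"
  fix \<rho>0 i j
  assume \<rho>0: "\<rho>0 \<in> dens n d (ominus ?S (vecs ?S)
                 {v. \<forall>k<M. v \<in> tensor_full n d (N k) (H_wloc n d \<Psi> M N (N k))})"
    and i: "i \<in> ?S" and j: "j \<in> ?S"
  have perp: "perp_range ?S w (evol ?L t \<rho>0)" if w: "w \<in> H_w n d \<Psi> M N" for w t
  proof (rule perp_range_evol[OF finite_configs mnorm1_lindblad0_le[OF finite_configs]])
    show "perp_range ?S w \<rho>0"
      using \<rho>0 H_w_subset_tensor_H_wloc[OF w] unfolding dens_def
      by (intro perp_range_if_supp_orth[OF finite_configs]) auto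
    show "perp_range ?S w (?L X)" if "perp_range ?S w X" for X
      using strict by (intro perp_range_H_w_lindblad0[OF _ D_local D_annih D_maps w that]) blast
  qed (simp add: sum_nonneg)
  have lim: "((\<lambda>t. INF \<sigma>\<in>dens n d (H_0 n d \<Psi> M N).
                      mnorm ?S (\<lambda>i j. evol ?L t \<rho>0 i j - \<sigma> i j)) \<longlongrightarrow> 0) at_top"
    using gas \<rho>0 unfolding GAS_def dens_def ominus_def by blast
  have nonempty: "dens n d (H_0 n d \<Psi> M N) \<noteq> {}"
    using rho_d_in_dens_H_0[OF Psi_vec Psi_unit] by blast
  show "((\<lambda>t. evol ?L t \<rho>0 i j) \<longlongrightarrow> rho_d \<Psi> i j) at_top"
    unfolding rho_d_def
    by (rule tendsto_target_if_dist_dens_tendsto_0[OF Psi_unit target_in_H_0[OF Psi_vec]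
          csubspace_H_0 nonempty _ lim i j]) (simp add: perp H_w_def)
qed

end
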